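(* Let $n$ be the number of processes, let $m$ be a positive integer, and let $k$ be a real number with $k\ge\sqrt{2n}$. Algorithm A (described in the context), with $\mathit{logNumIncrems}$ implemented as a $\lceil\log_2 m\rceil$-bounded max-register, is a wait-free linearizable implementation of a $k$-multiplicative-accurate $m$-bounded counter. When the max-register is implemented from read-write registers by an $h$-bounded max-register algorithm whose MaxRead and MaxWrite each take $O(\log h)$ steps, every Read and every Increment takes $O(\log\log m)$ steps.
   Context: Model: $n$ asynchronous, crash-prone processes communicate through linearizable shared objects. An implementation is wait-free if every process that takes infinitely many steps completes infinitely many operations. An implementation is linearizable if, in every execution, the complete operations and some of the incomplete operations can be totally ordered so that (a) the order respects the real-time order of non-overlapping operations and (b) the sequence satisfies the object's sequential specification. A max-register supports MaxWrite$(v)$ and MaxRead. A MaxRead returns the largest value among all preceding MaxWrites, or the initial value if there was none. It is $h$-bounded if no MaxWrite argument exceeds $h$. A $k$-multiplicative-accurate counter supports Increment and Read. In its sequential specification, each Read returns a value $x$ with $v/k\le x\le kv$, where $v$ is the number of preceding Increments. It is $m$-bounded if attention is restricted to executions with at most $m$ Increments. Algorithm A has one shared max-register $\mathit{logNumIncrems}$ with initial value $-1$. Each process has local variables $\mathit{lcounter}=0$, $\mathit{threshold}=1$ and $\mathit{nextVal}=0$. Increment(): - $\mathit{lcounter}\gets\mathit{lcounter}+1$. - If $\mathit{lcounter}=\mathit{threshold}$, then: - $\mathit{logNumIncrems}$.MaxWrite$(\mathit{nextVal})$; - $\mathit{nextVal}\gets \mathit{nextVal}+1$; - $\mathit{lcounter}\gets0$;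 - if $\mathit{nextVal}\ge2$, then $\mathit{threshold}\gets2\cdot\mathit{threshold}$. Read(): - $r\gets\mathit{logNumIncrems}$.MaxRead(). - If $r\ge0$, return $k\cdot2^r$; otherwise return $0$. *)

theory Defs
  imports Complex_Main
begin

text \<open>A history is a finite sequence of invocation and response events; processes are
  natural numbers.  An operation is identified by the index of its invocation event.\<close>

datatype ('a, 'r) hev = HInv nat 'a | HRes nat 'r

fun hproc :: "('a, 'r) hev \<Rightarrow> nat" where
  "hproc (HInv p _) = p"
| "hproc (HRes p _) = p"

fun is_HInv :: "('a, 'r) hev \<Rightarrow> bool" where
  "is_HInv (HInv _ _) = True"
| "is_HInv (HRes _ _) = False"

fun inv_arg :: "('a, 'r) hev \<Rightarrow> 'a" where
  "inv_arg (HInv _ a) = a"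

definition well_formed :: "('a, 'r) hev list \<Rightarrow> bool" where
  "well_formed h \<longleftrightarrow>
     (\<forall>p. let hp = filter (\<lambda>e. hproc e = p) h in
          \<forall>i < length hp. (even i \<longleftrightarrow> is_HInv (hp ! i)))"

definition op_inv :: "('a, 'r) hev list \<Rightarrow> nat \<Rightarrow> bool" where
  "op_inv h i \<longleftrightarrow> i < length h \<and> is_HInv (h ! i)"

definition resp_at :: "('a, 'r) hev list \<Rightarrow> nat \<Rightarrow> nat \<Rightarrow> bool" where
  "resp_at h i j \<longleftrightarrow> op_inv h i \<and> i < j \<and> j < length h \<and>
     hproc (h ! j) = hproc (h ! i) \<and> \<not> is_HInv (h ! j) \<and>
     (\<forall>l. i < l \<and> l < j \<longrightarrow> hproc (h ! l) \<noteq> hproc (h ! i))"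

text \<open>Linearizability w.r.t. a sequential specification \<open>legal\<close> (a set of sequences of
  operation/response pairs): the complete operations and some incomplete ones (the list
  \<open>L\<close>), with responses \<open>ret\<close> (the actual ones for complete operations), are totally
  ordered so that real-time order is respected and the sequence is legal.\<close>
definition linearizable :: "(('a \<times> 'r) list \<Rightarrow> bool) \<Rightarrow> ('a, 'r) hev list \<Rightarrow> bool" where
  "linearizable legal h \<longleftrightarrow> well_formed h \<and>
    (\<exists>(L :: nat list) (ret :: nat \<Rightarrow> 'r).
       distinct L \<and>
       (\<forall>i \<in> set L. op_inv h i) \<and>
       (\<forall>i j. resp_at h i j \<longrightarrow> i \<in> set L \<and> h ! j = HRes (hproc (h ! i)) (ret i)) \<and>
       (\<forall>a b. a < length L \<longrightarrow> b < length L \<longrightarrow>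
              (\<exists>j. resp_at h (L ! b) j \<and> j < L ! a) \<longrightarrow> b < a) \<and>
       legal (map (\<lambda>i. (inv_arg (h ! i), ret i)) L))"

datatype mop = MW int | MR
datatype mres = MAck | MVal int

definition mr_writes :: "(mop \<times> mres) list \<Rightarrow> int set" where
  "mr_writes s = {v. \<exists>r. (MW v, r) \<in> set s}"

definition mr_value :: "(mop \<times> mres) list \<Rightarrow> int" where
  "mr_value s = (if mr_writes s = {} then -1 else Max (mr_writes s))"

definition maxreg_legal :: "(mop \<times> mres) list \<Rightarrow> bool" where
  "maxreg_legal s \<longleftrightarrow> (\<forall>j < length s.
     snd (s ! j) = (case fst (s ! j) of MW v \<Rightarrow> MAck | MR \<Rightarrow> MVal (mr_value (take j s))))"

datatype cop = CInc | CRead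
datatype cres = CAck | CVal real

definition num_inc :: "(cop \<times> cres) list \<Rightarrow> nat" where
  "num_inc s = length (filter (\<lambda>x. fst x = CInc) s)"

definition counter_legal :: "real \<Rightarrow> (cop \<times> cres) list \<Rightarrow> bool" where
  "counter_legal k s \<longleftrightarrow> (\<forall>j < length s.
     (case fst (s ! j) of
        CInc \<Rightarrow> snd (s ! j) = CAck
      | CRead \<Rightarrow> (\<exists>x. snd (s ! j) = CVal x \<and>
                   real (num_inc (take j s)) / k \<le> x \<and> x \<le> k * real (num_inc (take j s)))))"

text \<open>Events (steps) of an execution.  \<open>MWInv\<close>/\<open>MRInv\<close>/\<open>MWResp\<close>/\<open>MRResp\<close> are invocations and
  responses of operations on the max-register \<open>logNumIncrems\<close>; \<open>MStep\<close> is an internal step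
  of the (arbitrary, black-box) max-register implementation taken by the process.\<close>
datatype ev =
    InvInc nat | InvRead nat
  | MWInv nat int | MRInv nat | MStep nat | MWResp nat | MRResp nat int
  | RespInc nat | RespRead nat real

fun eproc :: "ev \<Rightarrow> nat" where
  "eproc (InvInc p) = p" | "eproc (InvRead p) = p" | "eproc (MWInv p _) = p"
| "eproc (MRInv p) = p" | "eproc (MStep p) = p" | "eproc (MWResp p) = p"
| "eproc (MRResp p _) = p" | "eproc (RespInc p) = p" | "eproc (RespRead p _) = p"

datatype phase = Idle | IncStart | IncInMW | IncEnd | ReadStart | ReadInMR | ReadEnd int

record lstate =
  lcounter :: nat
  threshold :: nat
  nextVal :: int
  phase :: phase

definition init_lstate :: lstate where
  "init_lstate = \<lparr>lcounter = 0, threshold = 1, nextVal = 0, phase = Idle\<rparr>"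

fun astep :: "real \<Rightarrow> lstate \<Rightarrow> ev \<Rightarrow> lstate option" where
  "astep k s (InvInc _) =
     (if phase s = Idle then Some (s\<lparr>phase := IncStart\<rparr>) else None)"
| "astep k s (MWInv _ v) =
     (if phase s = IncStart \<and> lcounter s + 1 = threshold s \<and> v = nextVal s
      then Some (s\<lparr>lcounter := lcounter s + 1, phase := IncInMW\<rparr>) else None)"
| "astep k s (MWResp _) =
     (if phase s = IncInMW
      then Some (s\<lparr>nextVal := nextVal s + 1, lcounter := 0,
                   threshold := (if nextVal s + 1 \<ge> 2 then 2 * threshold s else threshold s),
                   phase := IncEnd\<rparr>)
      else None)"
| "astep k s (RespInc _) =
     (if phase s = IncEnd then Some (s\<lparr>phase := Idle\<rparr>)
      else if phase s = IncStart \<and> lcounter s + 1 \<noteq> threshold s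
      then Some (s\<lparr>lcounter := lcounter s + 1, phase := Idle\<rparr>)
      else None)"
| "astep k s (InvRead _) =
     (if phase s = Idle then Some (s\<lparr>phase := ReadStart\<rparr>) else None)"
| "astep k s (MRInv _) =
     (if phase s = ReadStart then Some (s\<lparr>phase := ReadInMR\<rparr>) else None)"
| "astep k s (MRResp _ r) =
     (if phase s = ReadInMR then Some (s\<lparr>phase := ReadEnd r\<rparr>) else None)"
| "astep k s (RespRead _ x) =
     (case phase s of
        ReadEnd r \<Rightarrow> (if x = (if r \<ge> 0 then k * 2 ^ nat r else 0)
                      then Some (s\<lparr>phase := Idle\<rparr>) else None)
      | _ \<Rightarrow> None)"
| "astep k s (MStep _) =
     (if phase s = IncInMW \<or> phase s = ReadInMR then Some s else None)"

fun arun :: "real \<Rightarrow> lstate \<Rightarrow> ev list \<Rightarrow> lstate option" where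
  "arun k s [] = Some s"
| "arun k s (e # es) = (case astep k s e of None \<Rightarrow> None | Some s' \<Rightarrow> arun k s' es)"

definition is_exec :: "nat \<Rightarrow> real \<Rightarrow> ev list \<Rightarrow> bool" where
  "is_exec n k es \<longleftrightarrow> (\<forall>e \<in> set es. eproc e < n) \<and>
     (\<forall>p < n. arun k init_lstate (filter (\<lambda>e. eproc e = p) es) \<noteq> None)"

fun mhist_ev :: "ev \<Rightarrow> (mop, mres) hev option" where
  "mhist_ev (MWInv p v) = Some (HInv p (MW v))"
| "mhist_ev (MRInv p) = Some (HInv p MR)"
| "mhist_ev (MWResp p) = Some (HRes p MAck)"
| "mhist_ev (MRResp p r) = Some (HRes p (MVal r))"
| "mhist_ev _ = None"

fun chist_ev :: "ev \<Rightarrow> (cop, cres) hev option" where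
  "chist_ev (InvInc p) = Some (HInv p CInc)"
| "chist_ev (InvRead p) = Some (HInv p CRead)"
| "chist_ev (RespInc p) = Some (HRes p CAck)"
| "chist_ev (RespRead p x) = Some (HRes p (CVal x))"
| "chist_ev _ = None"

definition mhist :: "ev list \<Rightarrow> (mop, mres) hev list" where
  "mhist es = List.map_filter mhist_ev es"

definition chist :: "ev list \<Rightarrow> (cop, cres) hev list" where
  "chist es = List.map_filter chist_ev es"

definition num_incs :: "ev list \<Rightarrow> nat" where
  "num_incs es = length (filter (\<lambda>e. \<exists>p. e = InvInc p) es)"

definition is_cresp :: "ev \<Rightarrow> bool" where
  "is_cresp e \<longleftrightarrow> (\<exists>p. e = RespInc p) \<or> (\<exists>p x. e = RespRead p x)"

definition is_cinv :: "ev \<Rightarrow> bool" where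
  "is_cinv e \<longleftrightarrow> (\<exists>p. e = InvInc p) \<or> (\<exists>p. e = InvRead p)"

definition is_mresp :: "ev \<Rightarrow> bool" where
  "is_mresp e \<longleftrightarrow> (\<exists>p. e = MWResp p) \<or> (\<exists>p r. e = MRResp p r)"

definition is_minv :: "ev \<Rightarrow> bool" where
  "is_minv e \<longleftrightarrow> (\<exists>p v. e = MWInv p v) \<or> (\<exists>p. e = MRInv p)"

text \<open>\<open>seg_steps P es i\<close>: number of steps of the process of event \<open>es ! i\<close>, from position
  \<open>i\<close> up to and including its first subsequent step satisfying \<open>P\<close> (or up to the end of
  the execution if there is none): the step count of the operation invoked at \<open>i\<close>.\<close>
definition seg_steps :: "(ev \<Rightarrow> bool) \<Rightarrow> ev list \<Rightarrow> nat \<Rightarrow> nat" where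
  "seg_steps P es i = card {l. i \<le> l \<and> l < length es \<and> eproc (es ! l) = eproc (es ! i) \<and>
      (\<forall>l'. i < l' \<and> l' < l \<longrightarrow> \<not> (eproc (es ! l') = eproc (es ! i) \<and> P (es ! l')))}"

definition maxreg_wait_free :: "(nat \<Rightarrow> ev) \<Rightarrow> bool" where
  "maxreg_wait_free f \<longleftrightarrow> (\<forall>t. is_minv (f t) \<and> infinite {t'. eproc (f t') = eproc (f t)} \<longrightarrow>
      (\<exists>t' > t. eproc (f t') = eproc (f t) \<and> is_mresp (f t')))"

end

theory Submission
  imports Defs "HOL-Library.Product_Lexorder" "HOL-Library.Infinite_Set"
begin

text \<open>Every process keeps the invariant that its number of invoked Increments equals
  \<open>lcounter + w nextVal\<close> (plus one while an Increment is pending), where \<open>w 0 = 0\<close> and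
  \<open>w v = 2\<^sup>v\<^sup>-\<^sup>1\<close>. Hence \<open>MaxWrite v\<close> is issued exactly when the writer has invoked
  \<open>2\<^sup>v\<close> Increments, so \<open>v \<le> \<lceil>log\<^sub>2 m\<rceil>\<close>.

  To linearize the counter, fix a linearization of the max-register history. A counter
  operation whose MaxRead or MaxWrite is the \<open>a\<close>-th linearized max-register operation gets
  the key \<open>(horizon a, a)\<close>, where \<open>horizon a\<close> is the latest invocation among the first
  \<open>a + 1\<close> linearized max-register operations; any other operation is keyed by the position of
  its invocation. Ordering by key respects real time. A Read whose MaxRead returns \<open>r \<ge> 0\<close>
  is then preceded by the \<open>2\<^sup>r\<close> Increments of the process that wrote \<open>r\<close>, and by at most
  \<open>2\<^sup>r\<^sup>+\<^sup>1\<close> Increments of each process, as nobody has written \<open>r + 1\<close> yet. With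
  \<open>2n \<le> k\<^sup>2\<close> the returned value \<open>k 2\<^sup>r\<close> is therefore \<open>k\<close>-accurate.

  Each counter operation performs at most one max-register operation and two further
  steps, which gives wait-freedom and the \<open>O(log log m)\<close> step bound.\<close>

definition hpos :: "('e \<Rightarrow> 'h option) \<Rightarrow> 'e list \<Rightarrow> nat list" where
  "hpos f es = filter (\<lambda>t. f (es!t) \<noteq> None) [0..<length es]"

definition hidx :: "('e \<Rightarrow> 'h option) \<Rightarrow> 'e list \<Rightarrow> nat \<Rightarrow> nat" where
  "hidx f es j = length (filter (\<lambda>t. f (es!t) \<noteq> None) [0..<j])"

lemma map_filter_conv_hpos: "List.map_filter f es = map (\<lambda>t. the (f (es!t))) (hpos f es)"
proof -
  have "List.map_filter f es = List.map_filter f (map (nth es) [0..<length es])"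
    by (simp add: map_nth)
  also have "\<dots> = map (\<lambda>t. the (f (es!t))) (hpos f es)"
    unfolding map_filter_def hpos_def by (simp add: filter_map comp_def)
  finally show ?thesis .
qed

lemma hpos_mono: "a < b \<Longrightarrow> b < length (hpos f es) \<Longrightarrow> hpos f es ! a < hpos f es ! b"
proof -
  have "sorted_wrt (<) (hpos f es)" unfolding hpos_def by (rule sorted_wrt_filter) simp
  then show "a < b \<Longrightarrow> b < length (hpos f es) \<Longrightarrow> hpos f es ! a < hpos f es ! b"
    using sorted_wrt_nth_less by blast
qed

lemma hpos_less_iff: "a < length (hpos f es) \<Longrightarrow> b < length (hpos f es) \<Longrightarrow>
   (hpos f es ! a < hpos f es ! b) = (a < b)"
  by (metis hpos_mono less_asym linorder_neqE_nat)

lemma hpos_nth: "a < length (hpos f es) \<Longrightarrow> hpos f es ! a < length es \<and> f (es ! (hpos f es ! a)) \<noteq> None"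
  using nth_mem unfolding hpos_def by fastforce

lemma hpos_hidx: "j < length es \<Longrightarrow> f (es!j) \<noteq> None \<Longrightarrow>
    hidx f es j < length (hpos f es) \<and> hpos f es ! hidx f es j = j"
proof -
  assume j: "j < length es" "f (es!j) \<noteq> None"
  have "[0..<length es] = [0..<j] @ [j..<length es]"
    using j(1) upt_add_eq_append[of 0 j "length es - j"] by simp
  also have "[j..<length es] = [j] @ [Suc j..<length es]" using j(1) upt_conv_Cons by simp
  finally have "[0..<length es] = [0..<j] @ [j] @ [Suc j..<length es]" .
  then have "hpos f es = filter (\<lambda>t. f (es!t) \<noteq> None) [0..<j] @ [j] @ filter (\<lambda>t. f (es!t) \<noteq> None) [Suc j..<length es]"
    unfolding hpos_def using j(2) by simp
  then show ?thesis unfolding hidx_def by (simp add: nth_append)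
qed

lemma hidx_hpos: "a < length (hpos f es) \<Longrightarrow> hidx f es (hpos f es ! a) = a"
proof -
  assume a: "a < length (hpos f es)"
  note ha = hpos_hidx[of "hpos f es ! a" es f, OF conjunct1[OF hpos_nth[OF a]] conjunct2[OF hpos_nth[OF a]]]
  show ?thesis
    using ha a hpos_mono[of "hidx f es (hpos f es ! a)" a f es] hpos_mono[of a "hidx f es (hpos f es ! a)" f es]
    by (cases "hidx f es (hpos f es ! a)" a rule: linorder_cases) auto
qed

lemma hidx_less_iff: "j < length es \<Longrightarrow> f (es!j) \<noteq> None \<Longrightarrow> j' < length es \<Longrightarrow>
    f (es!j') \<noteq> None \<Longrightarrow>
   (hidx f es j < hidx f es j') = (j < j')"
  by (metis hpos_hidx[of j es f] hpos_hidx[of j' es f] hpos_less_iff)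

lemma hidx_eq_iff: "j < length es \<Longrightarrow> f (es!j) \<noteq> None \<Longrightarrow> j' < length es \<Longrightarrow>
    f (es!j') \<noteq> None \<Longrightarrow>
   (hidx f es j = hidx f es j') = (j = j')"
  by (metis hpos_hidx)

lemma all_between_hidx_iff:
  assumes j: "j < length es" "f (es!j) \<noteq> None" and l: "l < length es" "f (es!l) \<noteq> None"
  shows "(\<forall>x. hidx f es j < x \<and> x < hidx f es l \<longrightarrow> Q (hpos f es ! x)) \<longleftrightarrow>
     (\<forall>x. j < x \<and> x < l \<and> f (es!x) \<noteq> None \<longrightarrow> Q x)"
proof
  assume H: "\<forall>x. hidx f es j < x \<and> x < hidx f es l \<longrightarrow> Q (hpos f es ! x)"
  show "\<forall>x. j < x \<and> x < l \<and> f (es!x) \<noteq> None \<longrightarrow> Q x"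
  proof (intro allI impI)
    fix x assume x: "j < x \<and> x < l \<and> f (es!x) \<noteq> None"
    then have "hidx f es j < hidx f es x" "hidx f es x < hidx f es l"
      using hidx_less_iff j l by (metis less_trans)+
    then show "Q x" using H hpos_hidx[of x es f] x l by fastforce
  qed
next
  assume H: "\<forall>x. j < x \<and> x < l \<and> f (es!x) \<noteq> None \<longrightarrow> Q x"
  show "\<forall>x. hidx f es j < x \<and> x < hidx f es l \<longrightarrow> Q (hpos f es ! x)"
  proof (intro allI impI)
    fix x assume x: "hidx f es j < x \<and> x < hidx f es l"
    then have xP: "x < length (hpos f es)" using hpos_hidx[of l es f, OF l] by simp
    have "j < hpos f es ! x" "hpos f es ! x < l"
      using hpos_hidx[of j es f, OF j] hpos_hidx[of l es f, OF l] x xP hpos_mono by metis+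
    then show "Q (hpos f es ! x)" using H hpos_nth[OF xP] by blast
  qed
qed

lemma resp_at_map_filter_iff:
  assumes hp: "\<And>e x. f e = Some x \<Longrightarrow> hproc x = eproc e"
    and j: "j < length es" "f (es!j) \<noteq> None" and l: "l < length es" "f (es!l) \<noteq> None"
  shows "resp_at (List.map_filter f es) (hidx f es j) (hidx f es l) \<longleftrightarrow>
     j < l \<and> is_HInv (the (f (es!j))) \<and> \<not> is_HInv (the (f (es!l))) \<and> eproc (es!l) = eproc (es!j) \<and>
     (\<forall>x. j < x \<and> x < l \<and> f (es!x) \<noteq> None \<longrightarrow> eproc (es!x) \<noteq> eproc (es!j))"
proof -
  let ?h = "List.map_filter f es"
  have nth_h: "\<And>a. a < length (hpos f es) \<Longrightarrow> ?h ! a = the (f (es ! (hpos f es ! a)))"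
    by (simp add: map_filter_conv_hpos)
  have hproc_h: "\<And>a. a < length (hpos f es) \<Longrightarrow> hproc (?h ! a) = eproc (es ! (hpos f es ! a))"
    using nth_h hp hpos_nth by fastforce
  note ij = hpos_hidx[of j es f, OF j] and il = hpos_hidx[of l es f, OF l]
  have between: "(\<forall>x. hidx f es j < x \<and> x < hidx f es l \<longrightarrow> hproc (?h ! x) \<noteq> hproc (?h ! hidx f es j)) \<longleftrightarrow>
     (\<forall>x. j < x \<and> x < l \<and> f (es!x) \<noteq> None \<longrightarrow> eproc (es!x) \<noteq> eproc (es!j))"
    using all_between_hidx_iff[OF j l, of "\<lambda>x. eproc (es!x) \<noteq> eproc (es!j)"] hproc_h ij il
    by (simp cong: conj_cong)
  have "hproc (the (f (es!j))) = eproc (es!j)" "hproc (the (f (es!l))) = eproc (es!l)"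
    using hp j(2) l(2) by auto
  then show ?thesis
    unfolding resp_at_def op_inv_def between
    using ij il nth_h hidx_less_iff[OF j l] by (auto simp: map_filter_conv_hpos)
qed

lemma resp_at_unique: "resp_at h i j \<Longrightarrow> resp_at h i j' \<Longrightarrow> j = j'"
  unfolding resp_at_def by (cases j j' rule: linorder_cases) blast+

definition local_state :: "real \<Rightarrow> ev list \<Rightarrow> nat \<Rightarrow> nat \<Rightarrow> lstate" where
  "local_state k es p t = the (arun k init_lstate (filter (\<lambda>e. eproc e = p) (take t es)))"

lemma arun_append: "arun k s (xs @ ys) = (case arun k s xs of None \<Rightarrow> None | Some s' \<Rightarrow> arun k s' ys)"
  by (induction xs arbitrary: s) (auto split: option.splits)

lemma arun_prefix: "arun k s (xs @ ys) \<noteq> None \<Longrightarrow> arun k s xs \<noteq> None"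
  by (simp add: arun_append split: option.splits)

lemma astep_InvIncD: "astep k s (InvInc q) = Some s' \<Longrightarrow> phase s = Idle \<and> s' = s\<lparr>phase := IncStart\<rparr>"
  by (auto split: if_splits)

lemma astep_InvReadD: "astep k s (InvRead q) = Some s' \<Longrightarrow> phase s = Idle \<and> s' = s\<lparr>phase := ReadStart\<rparr>"
  by (auto split: if_splits)

lemma astep_MWInvD: "astep k s (MWInv q v) = Some s' \<Longrightarrow> phase s = IncStart \<and> lcounter s + 1 = threshold s \<and>
   v = nextVal s \<and> s' = s\<lparr>lcounter := lcounter s + 1, phase := IncInMW\<rparr>"
  by (auto split: if_splits)

lemma astep_MWRespD: "astep k s (MWResp q) = Some s' \<Longrightarrow> phase s = IncInMW \<and>
   s' = s\<lparr>nextVal := nextVal s + 1, lcounter := 0,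
          threshold := (if nextVal s + 1 \<ge> 2 then 2 * threshold s else threshold s), phase := IncEnd\<rparr>"
  by (auto split: if_splits)

lemma astep_RespIncD: "astep k s (RespInc q) = Some s' \<Longrightarrow>
   (phase s = IncEnd \<and> s' = s\<lparr>phase := Idle\<rparr>) \<or>
   (phase s = IncStart \<and> lcounter s + 1 \<noteq> threshold s \<and> s' = s\<lparr>lcounter := lcounter s + 1, phase := Idle\<rparr>)"
  by (auto split: if_splits)

lemma astep_MRInvD: "astep k s (MRInv q) = Some s' \<Longrightarrow> phase s = ReadStart \<and> s' = s\<lparr>phase := ReadInMR\<rparr>"
  by (auto split: if_splits)

lemma astep_MRRespD: "astep k s (MRResp q r) = Some s' \<Longrightarrow> phase s = ReadInMR \<and> s' = s\<lparr>phase := ReadEnd r\<rparr>"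
  by (auto split: if_splits)

lemma astep_RespReadD: "astep k s (RespRead q x) = Some s' \<Longrightarrow>
   \<exists>r. phase s = ReadEnd r \<and> x = (if r \<ge> 0 then k * 2 ^ nat r else 0) \<and> s' = s\<lparr>phase := Idle\<rparr>"
  by (cases "phase s") (auto split: if_splits)

lemma astep_MStepD: "astep k s (MStep q) = Some s' \<Longrightarrow> (phase s = IncInMW \<or> phase s = ReadInMR) \<and> s' = s"
  by (auto split: if_splits)

lemma astep_into_maxreg: "astep k s e = Some s' \<Longrightarrow> phase s' = IncInMW \<or> phase s' = ReadInMR \<Longrightarrow>
    is_minv e \<or> (\<exists>q. e = MStep q)"
  by (cases e) (auto simp: is_minv_def split: if_splits phase.splits)

lemma astep_counter_event_Idle: "astep k s e = Some s' \<Longrightarrow> chist_ev e \<noteq> None \<Longrightarrow>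
    (phase s = Idle \<longleftrightarrow> is_cinv e) \<and> (phase s' = Idle \<longleftrightarrow> \<not> is_cinv e)"
  by (cases e) (auto simp: is_cinv_def split: if_splits phase.splits)

lemma astep_other_event_Idle: "astep k s e = Some s' \<Longrightarrow> chist_ev e = None \<Longrightarrow>
    phase s' = Idle \<longleftrightarrow> phase s = Idle"
  by (cases e) (auto split: if_splits phase.splits)

lemma astep_from_IncStart: "phase s = IncStart \<Longrightarrow> astep k s e = Some s' \<Longrightarrow> (\<exists>q v. e = MWInv q v) \<or>
    (\<exists>q. e = RespInc q)"
  by (cases e) (auto split: if_splits phase.splits)

lemma astep_from_IncInMW: "phase s = IncInMW \<Longrightarrow> astep k s e = Some s' \<Longrightarrow> (\<exists>q. e = MWResp q) \<or>
    (\<exists>q. e = MStep q)"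
  by (cases e) (auto split: if_splits phase.splits)

lemma astep_from_IncEnd: "phase s = IncEnd \<Longrightarrow> astep k s e = Some s' \<Longrightarrow> (\<exists>q. e = RespInc q)"
  by (cases e) (auto split: if_splits phase.splits)

lemma astep_from_ReadStart: "phase s = ReadStart \<Longrightarrow> astep k s e = Some s' \<Longrightarrow> (\<exists>q. e = MRInv q)"
  by (cases e) (auto split: if_splits phase.splits)

lemma astep_from_ReadInMR: "phase s = ReadInMR \<Longrightarrow> astep k s e = Some s' \<Longrightarrow> (\<exists>q r. e = MRResp q r) \<or>
    (\<exists>q. e = MStep q)"
  by (cases e) (auto split: if_splits phase.splits)

lemma astep_from_ReadEnd: "phase s = ReadEnd r \<Longrightarrow> astep k s e = Some s' \<Longrightarrow> (\<exists>q x. e = RespRead q x)"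
  by (cases e) (auto split: if_splits phase.splits)

locale execution =
  fixes n :: nat and k :: real and es :: "ev list"
  assumes ex: "is_exec n k es"
begin

abbreviation "lst p t \<equiv> local_state k es p t"

lemma eproc_less: "e \<in> set es \<Longrightarrow> eproc e < n" using ex unfolding is_exec_def by auto

lemma arun_local_state: assumes t: "t \<le> length es"
  shows "arun k init_lstate (filter (\<lambda>e. eproc e = p) (take t es)) = Some (lst p t)"
proof (cases "p < n")
  case True
  have "arun k init_lstate (filter (\<lambda>e. eproc e = p) es) \<noteq> None"
    using ex True unfolding is_exec_def by auto
  moreover have "filter (\<lambda>e. eproc e = p) es = filter (\<lambda>e. eproc e = p) (take t es) @ filter (\<lambda>e. eproc e = p) (drop t es)"
    by (metis append_take_drop_id filter_append)
  ultimately have "arun k init_lstate (filter (\<lambda>e. eproc e = p) (take t es)) \<noteq> None"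
    using arun_prefix by metis
  then show ?thesis unfolding local_state_def by auto
next
  case False
  have "\<forall>e\<in>set (take t es). eproc e \<noteq> p"
    using False by (auto dest!: in_set_takeD eproc_less)
  then have "filter (\<lambda>e. eproc e = p) (take t es) = []" by (simp add: filter_empty_conv)
  then show ?thesis unfolding local_state_def by simp
qed

lemma lst_0: "lst p 0 = init_lstate" unfolding local_state_def by simp

lemma lst_step: assumes "t < length es" "eproc (es!t) = p"
  shows "astep k (lst p t) (es!t) = Some (lst p (Suc t))"
proof -
  have f: "filter (\<lambda>e. eproc e = p) (take (Suc t) es) = filter (\<lambda>e. eproc e = p) (take t es) @ [es!t]"
    using assms by (simp add: take_Suc_conv_app_nth)
  have "arun k init_lstate (filter (\<lambda>e. eproc e = p) (take (Suc t) es)) = Some (lst p (Suc t))"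
    using arun_local_state assms by simp
  then have "arun k (lst p t) [es!t] = Some (lst p (Suc t))"
    unfolding f arun_append using arun_local_state[of t p] assms by simp
  then show ?thesis by (simp split: option.splits)
qed

lemma lst_other: "t < length es \<Longrightarrow> eproc (es!t) \<noteq> p \<Longrightarrow> lst p (Suc t) = lst p t"
  unfolding local_state_def by (simp add: take_Suc_conv_app_nth)

lemma lst_const: "t \<le> t' \<Longrightarrow> t' \<le> length es \<Longrightarrow>
   (\<forall>l. t \<le> l \<and> l < t' \<and> eproc (es!l) = p \<longrightarrow> es!l = MStep p) \<Longrightarrow> lst p t' = lst p t"
proof (induction t' rule: dec_induct)
  case base then show ?case by simp
next
  case (step m)
  have "lst p (Suc m) = lst p m"
  proof (cases "eproc (es!m) = p")
    case True
    then have "es!m = MStep p" using step by auto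
    moreover have "astep k (lst p m) (es!m) = Some (lst p (Suc m))" using lst_step[of m p] step True by simp
    ultimately have "astep k (lst p m) (MStep p) = Some (lst p (Suc m))" by simp
    then show ?thesis using astep_MStepD by blast
  next
    case False then show ?thesis using lst_other step by auto
  qed
  then show ?case using step by auto
qed

definition has_next :: "nat \<Rightarrow> nat \<Rightarrow> bool" where
  "has_next p t \<longleftrightarrow> (\<exists>t'. t < t' \<and> t' < length es \<and> eproc (es!t') = p \<and> es!t' \<noteq> MStep p)"

definition next_step :: "nat \<Rightarrow> nat \<Rightarrow> nat" where
  "next_step p t = (LEAST t'. t < t' \<and> t' < length es \<and> eproc (es!t') = p \<and> es!t' \<noteq> MStep p)"

lemma next_step: assumes "has_next p t"
  shows "t < next_step p t" "next_step p t < length es" "eproc (es!next_step p t) = p" "es!next_step p t \<noteq> MStep p"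
    "\<And>l. t < l \<Longrightarrow> l < next_step p t \<Longrightarrow> eproc (es!l) = p \<Longrightarrow> es!l = MStep p"
proof -
  let ?P = "\<lambda>t'. t < t' \<and> t' < length es \<and> eproc (es!t') = p \<and> es!t' \<noteq> MStep p"
  have "?P (next_step p t)" using assms unfolding has_next_def next_step_def by (rule LeastI_ex)
  then show "t < next_step p t" "next_step p t < length es" "eproc (es!next_step p t) = p" "es!next_step p t \<noteq> MStep p" by auto
  fix l assume l: "t < l" "l < next_step p t" "eproc (es!l) = p"
  have "\<not> ?P l" using l(2) unfolding next_step_def by (rule not_less_Least)
  then show "es!l = MStep p" using l \<open>?P (next_step p t)\<close> by auto
qed

lemma next_step_le: "t < t' \<Longrightarrow> t' < length es \<Longrightarrow> eproc (es!t') = p \<Longrightarrow>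
    es!t' \<noteq> MStep p \<Longrightarrow> has_next p t \<and> next_step p t \<le> t'"
  unfolding has_next_def next_step_def by (auto intro: Least_le)

lemma next_step_inj:
  assumes "has_next p t" "has_next p t'" "next_step p t = next_step p t'"
    and "eproc (es!t) = p" "eproc (es!t') = p" "es!t \<noteq> MStep p" "es!t' \<noteq> MStep p"
  shows "t = t'"
  using next_step(1,5)[OF assms(1)] next_step(1,5)[OF assms(2)] assms(3-7)
  by (metis linorder_neqE_nat)

lemma lst_next_step: "has_next p t \<Longrightarrow> lst p (next_step p t) = lst p (Suc t)"
  using next_step[of p t] by (intro lst_const) auto

lemma astep_next_step: "has_next p t \<Longrightarrow> astep k (lst p (Suc t)) (es!next_step p t) = Some (lst p (Suc (next_step p t)))"
  using next_step[of p t] lst_step lst_next_step by metis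

lemma next_after_InvInc: assumes "es!t = InvInc p" "t < length es" "has_next p t"
  shows "(\<exists>v. es!(next_step p t) = MWInv p v) \<or> (es!(next_step p t) = RespInc p \<and> phase (lst p (next_step p t)) = IncStart)"
proof -
  have st0: "astep k (lst p t) (es!t) = Some (lst p (Suc t))" using assms by (intro lst_step) auto
  have ph: "phase (lst p (Suc t)) = IncStart" using astep_InvIncD[OF st0[unfolded assms(1)]] by simp
  have st: "astep k (lst p (Suc t)) (es!next_step p t) = Some (lst p (Suc (next_step p t)))"
    using astep_next_step assms(3) .
  have ep: "eproc (es!next_step p t) = p" using next_step assms(3) by blast
  from astep_from_IncStart[OF ph st] ep show ?thesis using lst_next_step[OF assms(3)] ph by auto
qed

lemma next_after_InvRead: assumes "es!t = InvRead p" "t < length es" "has_next p t"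
  shows "es!(next_step p t) = MRInv p"
proof -
  have st0: "astep k (lst p t) (es!t) = Some (lst p (Suc t))" using assms by (intro lst_step) auto
  have ph: "phase (lst p (Suc t)) = ReadStart" using astep_InvReadD[OF st0[unfolded assms(1)]] by simp
  have st: "astep k (lst p (Suc t)) (es!next_step p t) = Some (lst p (Suc (next_step p t)))"
    using astep_next_step assms(3) .
  have ep: "eproc (es!next_step p t) = p" using next_step assms(3) by blast
  from astep_from_ReadStart[OF ph st] ep show ?thesis by auto
qed

lemma next_after_MWInv: assumes "es!t = MWInv p v" "t < length es" "has_next p t"
  shows "es!(next_step p t) = MWResp p"
proof -
  have st0: "astep k (lst p t) (es!t) = Some (lst p (Suc t))" using assms by (intro lst_step) auto
  have ph: "phase (lst p (Suc t)) = IncInMW" using astep_MWInvD[OF st0[unfolded assms(1)]] by simp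
  have st: "astep k (lst p (Suc t)) (es!next_step p t) = Some (lst p (Suc (next_step p t)))"
    using astep_next_step assms(3) .
  have ep: "eproc (es!next_step p t) = p" "es!next_step p t \<noteq> MStep p"
    using next_step assms(3) by blast+
  from astep_from_IncInMW[OF ph st] ep show ?thesis by auto
qed

lemma next_after_MRInv: assumes "es!t = MRInv p" "t < length es" "has_next p t"
  shows "\<exists>r. es!(next_step p t) = MRResp p r"
proof -
  have st0: "astep k (lst p t) (es!t) = Some (lst p (Suc t))" using assms by (intro lst_step) auto
  have ph: "phase (lst p (Suc t)) = ReadInMR" using astep_MRInvD[OF st0[unfolded assms(1)]] by simp
  have st: "astep k (lst p (Suc t)) (es!next_step p t) = Some (lst p (Suc (next_step p t)))"
    using astep_next_step assms(3) .
  have ep: "eproc (es!next_step p t) = p" "es!next_step p t \<noteq> MStep p"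
    using next_step assms(3) by blast+
  from astep_from_ReadInMR[OF ph st] ep show ?thesis by auto
qed

lemma next_after_MWResp: assumes "es!t = MWResp p" "t < length es" "has_next p t"
  shows "es!(next_step p t) = RespInc p"
proof -
  have st0: "astep k (lst p t) (es!t) = Some (lst p (Suc t))" using assms by (intro lst_step) auto
  have ph: "phase (lst p (Suc t)) = IncEnd" using astep_MWRespD[OF st0[unfolded assms(1)]] by simp
  have st: "astep k (lst p (Suc t)) (es!next_step p t) = Some (lst p (Suc (next_step p t)))"
    using astep_next_step assms(3) .
  have ep: "eproc (es!next_step p t) = p" using next_step assms(3) by blast
  from astep_from_IncEnd[OF ph st] ep show ?thesis by auto
qed

lemma next_after_MRResp: assumes "es!t = MRResp p r" "t < length es" "has_next p t"
  shows "es!(next_step p t) = RespRead p (if r \<ge> 0 then k * 2 ^ nat r else 0)"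
proof -
  have st0: "astep k (lst p t) (es!t) = Some (lst p (Suc t))" using assms by (intro lst_step) auto
  have ph: "phase (lst p (Suc t)) = ReadEnd r" using astep_MRRespD[OF st0[unfolded assms(1)]] by simp
  have st: "astep k (lst p (Suc t)) (es!next_step p t) = Some (lst p (Suc (next_step p t)))"
    using astep_next_step assms(3) .
  have ep: "eproc (es!next_step p t) = p" using next_step assms(3) by blast
  from astep_from_ReadEnd[OF ph st] ep obtain x where x: "es!next_step p t = RespRead p x" by auto
  from astep_RespReadD[OF st[unfolded x]] ph x show ?thesis by auto
qed

lemma next_step_le_after_non_maxreg:
  assumes t: "t < length es" "eproc (es!t) = p" "\<not> is_minv (es!t)" "es!t \<noteq> MStep p"
    and l: "t < l" "l < length es" "eproc (es!l) = p"
  shows "has_next p t \<and> next_step p t \<le> l"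
proof -
  have ph: "phase (lst p (Suc t)) \<noteq> IncInMW" "phase (lst p (Suc t)) \<noteq> ReadInMR"
    using astep_into_maxreg[OF lst_step[OF t(1,2)]] t by auto
  let ?Q = "\<lambda>l. t < l \<and> l < length es \<and> eproc (es!l) = p"
  define l1 where "l1 = (LEAST l. ?Q l)"
  have q1: "?Q l1" unfolding l1_def using l by (intro LeastI[of ?Q l]) auto
  have le: "l1 \<le> l" unfolding l1_def using l by (intro Least_le) auto
  have "\<And>x. t < x \<Longrightarrow> x < l1 \<Longrightarrow> eproc (es!x) \<noteq> p"
    using not_less_Least q1 unfolding l1_def by (metis (mono_tags, lifting) less_trans)
  then have "lst p l1 = lst p (Suc t)" using q1 by (intro lst_const) auto
  then have "astep k (lst p (Suc t)) (es!l1) = Some (lst p (Suc l1))" using lst_step q1 by metis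
  then have "es!l1 \<noteq> MStep p" using astep_MStepD ph by fastforce
  then show ?thesis using next_step_le[of t l1 p] q1 le by auto
qed

end

section \<open>The counting invariant\<close>

definition inc_count :: "ev list \<Rightarrow> nat \<Rightarrow> nat \<Rightarrow> nat" where
  "inc_count es p t = length (filter (\<lambda>e. e = InvInc p) (take t es))"

lemma inc_count_Suc:
  "t < length es \<Longrightarrow> inc_count es p (Suc t) = inc_count es p t + (if es!t = InvInc p then 1 else 0)"
  unfolding inc_count_def by (simp add: take_Suc_conv_app_nth)

text \<open>The thresholds are \<open>1, 1, 2, 4, \<dots>\<close>, so the MaxWrites \<open>0, \<dots>, v - 1\<close> account for
  \<open>2\<^sup>v\<^sup>-\<^sup>1\<close> Increments when \<open>v \<ge> 1\<close>.\<close>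
definition incs_before_write :: "int \<Rightarrow> nat" where
  "incs_before_write v = (if v = 0 then 0 else 2 ^ (nat v - 1))"

definition count_inv :: "lstate \<Rightarrow> nat \<Rightarrow> bool" where
  "count_inv s c \<longleftrightarrow> nextVal s \<ge> 0 \<and> threshold s = 2 ^ (nat (nextVal s) - 1) \<and>
     (phase s = IncInMW \<longrightarrow> lcounter s = threshold s) \<and> (phase s \<noteq> IncInMW \<longrightarrow> lcounter s < threshold s) \<and>
     c = lcounter s + incs_before_write (nextVal s) + (if phase s = IncStart then 1 else 0)"

lemma double_power_pred: "1 \<le> v \<Longrightarrow> 2 * (2::nat) ^ (v - 1) = 2 ^ v"
  by (metis Suc_diff_1 less_le_trans power_Suc zero_less_one)

lemma incs_before_write_Suc:
  "(v::int) \<ge> 0 \<Longrightarrow> 2 ^ (nat v - 1) + incs_before_write v = incs_before_write (v + 1)"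
  using double_power_pred[of "nat v"] unfolding incs_before_write_def
  by (cases "v = 0") (auto simp: nat_add_distrib mult_2)

lemma threshold_Suc: "(v::int) \<ge> 0 \<Longrightarrow>
    (if v + 1 \<ge> 2 then 2 * 2 ^ (nat v - 1) else 2 ^ (nat v - 1)) = (2::nat) ^ (nat (v + 1) - 1)"
  using double_power_pred[of "nat v"] by (cases "v = 0") (auto simp: nat_add_distrib)

lemma count_inv_step:
  assumes inv: "count_inv s c" and st: "astep k s e = Some s'"
  shows "count_inv s' (c + (if (\<exists>q. e = InvInc q) then 1 else 0))"
proof (cases e)
  case (MWResp q)
  then have s': "phase s = IncInMW" "s' = s\<lparr>nextVal := nextVal s + 1, lcounter := 0,
          threshold := (if nextVal s + 1 \<ge> 2 then 2 * threshold s else threshold s), phase := IncEnd\<rparr>"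
    using astep_MWRespD[OF st[unfolded MWResp]] by auto
  have v: "nextVal s \<ge> 0" "threshold s = 2 ^ (nat (nextVal s) - 1)" "lcounter s = threshold s"
    "c = lcounter s + incs_before_write (nextVal s)"
    using inv s'(1) unfolding count_inv_def by auto
  have "threshold s' = (if nextVal s + 1 \<ge> 2 then 2 * threshold s else threshold s)"
    using s'(2) by simp
  also have "\<dots> = 2 ^ (nat (nextVal s + 1) - 1)"
    unfolding v(2) by (rule threshold_Suc[OF v(1)])
  finally have "threshold s' = 2 ^ (nat (nextVal s') - 1)" using s'(2) by simp
  moreover have "c = incs_before_write (nextVal s')"
    using s'(2) v incs_before_write_Suc[OF v(1)] by simp
  ultimately show ?thesis using MWResp s' v(1) unfolding count_inv_def by auto
next
  case (RespInc q)
  from astep_RespIncD[OF st[unfolded RespInc]] show ?thesis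
  proof (elim disjE conjE)
    assume a: "phase s = IncStart" "lcounter s + 1 \<noteq> threshold s"
      "s' = s\<lparr>lcounter := lcounter s + 1, phase := Idle\<rparr>"
    then have "lcounter s + 1 < threshold s" using inv unfolding count_inv_def by auto
    then show ?thesis using inv RespInc a unfolding count_inv_def by simp
  qed (use inv RespInc in \<open>simp add: count_inv_def\<close>)
next
  case (InvInc q) then show ?thesis
    using inv astep_InvIncD[OF st[unfolded InvInc]] unfolding count_inv_def by auto
next
  case (InvRead q) then show ?thesis
    using inv astep_InvReadD[OF st[unfolded InvRead]] unfolding count_inv_def by auto
next
  case (MWInv q v) then show ?thesis
    using inv astep_MWInvD[OF st[unfolded MWInv]] unfolding count_inv_def by auto
next
  case (MRInv q) then show ?thesis
    using inv astep_MRInvD[OF st[unfolded MRInv]] unfolding count_inv_def by auto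
next
  case (MRResp q r) then show ?thesis
    using inv astep_MRRespD[OF st[unfolded MRResp]] unfolding count_inv_def by auto
next
  case (RespRead q x) then show ?thesis
    using inv astep_RespReadD[OF st[unfolded RespRead]] unfolding count_inv_def by fastforce
next
  case (MStep q) then show ?thesis using inv astep_MStepD[OF st[unfolded MStep]] by auto
qed

lemma length_filter_mono_pred: "(\<And>x. P x \<Longrightarrow> Q x) \<Longrightarrow> length (filter P xs) \<le> length (filter Q xs)"
  by (induct xs) auto

context execution begin

lemma count_inv_lst: "t \<le> length es \<Longrightarrow> count_inv (lst p t) (inc_count es p t)"
proof (induction t)
  case 0 then show ?case unfolding count_inv_def lst_0 init_lstate_def inc_count_def incs_before_write_def by simp
next
  case (Suc t)
  then have t: "t < length es" by simp
  show ?case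
  proof (cases "eproc (es!t) = p")
    case True
    have "inc_count es p (Suc t) = inc_count es p t + (if (\<exists>q. es!t = InvInc q) then 1 else 0)"
      using inc_count_Suc[OF t, of p] True by auto
    then show ?thesis using count_inv_step[OF Suc.IH lst_step[OF t True]] t by simp
  next
    case False
    then have "inc_count es p (Suc t) = inc_count es p t" using inc_count_Suc[OF t, of p] by auto
    then show ?thesis using lst_other[OF t False] Suc.IH t by simp
  qed
qed

lemma inc_count_at_MWInv: assumes "es!t = MWInv p v" "t < length es"
  shows "v \<ge> 0 \<and> inc_count es p t = 2 ^ nat v"
proof -
  have "astep k (lst p t) (MWInv p v) = Some (lst p (Suc t))" using lst_step[of t p] assms by simp
  note step = astep_MWInvD[OF this]
  have inv: "count_inv (lst p t) (inc_count es p t)" using count_inv_lst assms by simp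
  then have v: "v \<ge> 0" "inc_count es p t = 2 ^ (nat v - 1) + incs_before_write v"
    using step unfolding count_inv_def by auto
  have "inc_count es p t = incs_before_write (v + 1)" using v incs_before_write_Suc by simp
  then show ?thesis using v(1) unfolding incs_before_write_def by (simp add: nat_add_distrib)
qed

lemma inc_count_at_short_RespInc:
  assumes "es!t = RespInc p" "t < length es" "phase (lst p t) = IncStart"
  shows "nextVal (lst p t) \<ge> 1 \<and> inc_count es p t < 2 ^ nat (nextVal (lst p t))"
proof -
  let ?v = "nextVal (lst p t)"
  have "astep k (lst p t) (RespInc p) = Some (lst p (Suc t))" using lst_step[of t p] assms by simp
  then have a: "lcounter (lst p t) + 1 \<noteq> threshold (lst p t)" using assms(3) by (simp split: if_splits)
  have inv: "count_inv (lst p t) (inc_count es p t)" using count_inv_lst assms by simp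
  then have "?v \<noteq> 0" using a assms(3) unfolding count_inv_def by auto
  then have "1 \<le> nat ?v" using inv unfolding count_inv_def by auto
  then show ?thesis
    using a inv assms(3) double_power_pred[of "nat ?v"] \<open>?v \<noteq> 0\<close>
    unfolding count_inv_def incs_before_write_def by auto
qed

lemma inc_count_const: "t \<le> t' \<Longrightarrow> t' \<le> length es \<Longrightarrow>
    (\<forall>x. t \<le> x \<and> x < t' \<longrightarrow> es!x \<noteq> InvInc q) \<Longrightarrow> inc_count es q t' = inc_count es q t"
proof (induction t' rule: dec_induct)
  case base then show ?case by simp
next
  case (step m) then show ?case using inc_count_Suc[of m es q] by auto
qed

lemma inc_count_card: "t \<le> length es \<Longrightarrow> inc_count es q t = card {x. x < t \<and> es!x = InvInc q}"
  unfolding inc_count_def length_filter_conv_card by (rule arg_cong[where f=card]) auto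

lemma inc_count_next_step: assumes "has_next q i" "i < length es" shows "inc_count es q (next_step q i) = inc_count es q (Suc i)"
proof -
  note N = next_step[OF assms(1)]
  show ?thesis
  proof (rule inc_count_const)
    show "Suc i \<le> next_step q i" "next_step q i \<le> length es" using N by auto
    show "\<forall>x. Suc i \<le> x \<and> x < next_step q i \<longrightarrow> es!x \<noteq> InvInc q"
    proof (intro allI impI)
      fix x assume x: "Suc i \<le> x \<and> x < next_step q i"
      show "es!x \<noteq> InvInc q"
      proof
        assume e: "es!x = InvInc q"
        then have "es!x = MStep q" using N(5)[of x] x by simp
        then show False using e by simp
      qed
    qed
  qed
qed

lemma inc_count_le_num_incs: "t \<le> length es \<Longrightarrow> inc_count es p t \<le> num_incs es"
proof -
  assume t: "t \<le> length es"
  have "inc_count es p t \<le> length (filter (\<lambda>e. \<exists>p. e = InvInc p) (take t es))"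
    unfolding inc_count_def by (rule length_filter_mono_pred) auto
  also have "\<dots> \<le> num_incs es" unfolding num_incs_def
    by (metis append_take_drop_id filter_append le_add1 length_append)
  finally show ?thesis .
qed

end

theorem MWInv_arg_bound:
  assumes "is_exec n k es" "num_incs es \<le> m" "1 \<le> m" "MWInv p v \<in> set es"
  shows "v \<le> \<lceil>log 2 (real m)\<rceil>"
proof -
  interpret execution n k es by (rule execution.intro) (rule assms(1))
  obtain t where t: "t < length es" "es!t = MWInv p v" using assms(4) by (auto simp: in_set_conv_nth)
  have F: "v \<ge> 0" "inc_count es p t = 2 ^ nat v" using inc_count_at_MWInv[OF t(2,1)] by auto
  have "2 ^ nat v \<le> m" using inc_count_le_num_incs[of t p] t F assms(2) by simp
  then have "(2::real) ^ nat v \<le> real m" by (metis of_nat_le_iff of_nat_numeral of_nat_power)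
  then have "real (nat v) \<le> log 2 (real m)" by (intro le_log_of_power) auto
  then have "real_of_int v \<le> log 2 (real m)" using F(1) by simp
  then show ?thesis by (metis ceiling_mono ceiling_of_int)
qed

context execution begin

definition only_internal :: "nat \<Rightarrow> nat \<Rightarrow> nat \<Rightarrow> bool" where
  "only_internal p a b \<longleftrightarrow> (\<forall>l. a < l \<and> l < b \<and> eproc (es!l) = p \<longrightarrow> es!l = MStep p)"

text \<open>Where the phase of \<open>p\<close> before step \<open>t\<close> comes from: the invocation of its pending
  operation, and its last completed MaxWrite.\<close>
definition trace_inv :: "nat \<Rightarrow> nat \<Rightarrow> bool" where
  "trace_inv p t \<longleftrightarrow>
   (phase (lst p t) = IncStart \<longrightarrow> (\<exists>i<t. es!i = InvInc p \<and> only_internal p i t)) \<and>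
   (phase (lst p t) = IncInMW \<longrightarrow> (\<exists>j<t. es!j = MWInv p (nextVal (lst p t)) \<and> only_internal p j t)) \<and>
   (phase (lst p t) = ReadInMR \<longrightarrow> (\<exists>j<t. es!j = MRInv p \<and> only_internal p j t)) \<and>
   (phase (lst p t) \<noteq> IncInMW \<and> nextVal (lst p t) \<ge> 1 \<longrightarrow>
      (\<exists>j l0. j < l0 \<and> l0 < t \<and> es!j = MWInv p (nextVal (lst p t) - 1) \<and> es!l0 = MWResp p \<and> only_internal p j l0))"

lemma trace_inv_other_step:
  assumes t: "t < length es" "eproc (es!t) \<noteq> p" and inv: "trace_inv p t"
  shows "trace_inv p (Suc t)"
proof -
  have e: "lst p (Suc t) = lst p t" using lst_other t by simp
  have "\<And>a. only_internal p a t \<Longrightarrow> only_internal p a (Suc t)"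
    using t(2) by (auto simp: only_internal_def less_Suc_eq)
  then show ?thesis using inv less_SucI unfolding trace_inv_def e by meson
qed

lemma trace_inv_own_step:
  assumes t: "t < length es" and own: "eproc (es!t) = p" and inv: "trace_inv p t"
  shows "trace_inv p (Suc t)"
proof -
  note IH = inv[unfolded trace_inv_def]
  have st: "astep k (lst p t) (es!t) = Some (lst p (Suc t))" using t own by (rule lst_step)
  have t0: "only_internal p t (Suc t)" by (auto simp: only_internal_def)
  have extM: "\<And>a. only_internal p a t \<Longrightarrow> es!t = MStep p \<Longrightarrow> only_internal p a (Suc t)"
    by (auto simp: only_internal_def less_Suc_eq)
  show ?thesis
  proof (cases "es!t")
    case (InvInc q)
    with own have q: "q = p" by simp
    note h = astep_InvIncD[OF st[unfolded InvInc]]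
    have "\<exists>i<Suc t. es!i = InvInc p \<and> only_internal p i (Suc t)" using t0 InvInc q by blast
    then show ?thesis unfolding trace_inv_def using IH h by (auto; blast intro: less_SucI)
  next
    case (InvRead q)
    note h = astep_InvReadD[OF st[unfolded InvRead]]
    show ?thesis unfolding trace_inv_def using IH h by (auto; blast intro: less_SucI)
  next
    case (MWInv q v)
    with own have q: "q = p" by simp
    note h = astep_MWInvD[OF st[unfolded MWInv]]
    have "\<exists>j<Suc t. es!j = MWInv p v \<and> only_internal p j (Suc t)" using t0 MWInv q by blast
    then show ?thesis unfolding trace_inv_def using h by auto
  next
    case (MWResp q)
    with own have q: "q = p" by simp
    note h = astep_MWRespD[OF st[unfolded MWResp]]
    obtain j where j: "j < t" "es!j = MWInv p (nextVal (lst p t))" "only_internal p j t" using IH h by auto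
    have "\<exists>j l0. j < l0 \<and> l0 < Suc t \<and> es!j = MWInv p (nextVal (lst p (Suc t)) - 1) \<and> es!l0 = MWResp p \<and>
      only_internal p j l0"
      using j h MWResp q by (intro exI[of _ j] exI[of _ t]) auto
    then show ?thesis unfolding trace_inv_def using h by auto
  next
    case (MRInv q)
    with own have q: "q = p" by simp
    note h = astep_MRInvD[OF st[unfolded MRInv]]
    have "\<exists>j<Suc t. es!j = MRInv p \<and> only_internal p j (Suc t)" using t0 MRInv q by blast
    then show ?thesis unfolding trace_inv_def using IH h by (auto; blast intro: less_SucI)
  next
    case (MRResp q r)
    note h = astep_MRRespD[OF st[unfolded MRResp]]
    show ?thesis unfolding trace_inv_def using IH h by (auto; blast intro: less_SucI)
  next
    case (RespInc q)
    note h = astep_RespIncD[OF st[unfolded RespInc]]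
    have hh: "phase (lst p t) \<noteq> IncInMW" "phase (lst p (Suc t)) = Idle" "nextVal (lst p (Suc t)) = nextVal (lst p t)"
      using h by auto
    show ?thesis unfolding trace_inv_def using IH hh by (auto; blast intro: less_SucI)
  next
    case (RespRead q x)
    obtain r where h: "phase (lst p t) = ReadEnd r" "lst p (Suc t) = (lst p t)\<lparr>phase := Idle\<rparr>"
      using astep_RespReadD[OF st[unfolded RespRead]] by blast
    show ?thesis unfolding trace_inv_def using IH h by (auto; blast intro: less_SucI)
  next
    case (MStep q)
    with own have q: "q = p" by simp
    note h = astep_MStepD[OF st[unfolded MStep]]
    have e: "lst p (Suc t) = lst p t" using h by simp
    have ext: "\<And>a. only_internal p a t \<Longrightarrow> only_internal p a (Suc t)"
      using extM MStep q by simp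
    show ?thesis unfolding trace_inv_def e using IH ext less_SucI by meson
  qed
qed

lemma trace_inv_lst: "t \<le> length es \<Longrightarrow> trace_inv p t"
proof (induction t)
  case 0 then show ?case unfolding trace_inv_def lst_0 init_lstate_def by simp
next
  case (Suc t)
  then show ?case using trace_inv_own_step trace_inv_other_step by (cases "eproc (es!t) = p") auto
qed

end

lemma hproc_chist_ev: "chist_ev e = Some x \<Longrightarrow> hproc x = eproc e" by (cases e) auto

lemma hproc_mhist_ev: "mhist_ev e = Some x \<Longrightarrow> hproc x = eproc e" by (cases e) auto

lemma is_HInv_chist_ev: "chist_ev e \<noteq> None \<Longrightarrow> is_HInv (the (chist_ev e)) = is_cinv e"
  by (cases e) (auto simp: is_cinv_def)

lemma filter_hproc_chist: "filter (\<lambda>e. hproc e = p) (List.map_filter chist_ev xs) =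
   map (\<lambda>e. the (chist_ev e)) (filter (\<lambda>e. eproc e = p \<and> chist_ev e \<noteq> None) xs)"
proof (induction xs)
  case Nil then show ?case by (simp add: List.map_filter_simps)
next
  case (Cons x xs)
  then show ?case by (cases "chist_ev x") (auto simp: List.map_filter_simps hproc_chist_ev)
qed

context execution begin

definition cevents :: "nat \<Rightarrow> nat \<Rightarrow> ev list" where
  "cevents p t = filter (\<lambda>e. eproc e = p \<and> chist_ev e \<noteq> None) (take t es)"

lemma cevents_alternate: "t \<le> length es \<Longrightarrow>
    (\<forall>i<length (cevents p t). even i \<longleftrightarrow> is_cinv (cevents p t ! i)) \<and>
   (even (length (cevents p t)) \<longleftrightarrow> phase (lst p t) = Idle)"
proof (induction t)
  case 0 then show ?case unfolding cevents_def lst_0 init_lstate_def by simp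
next
  case (Suc t)
  then have t: "t < length es" by simp
  note IH = Suc.IH[OF less_imp_le[OF t]]
  have cs: "cevents p (Suc t) = cevents p t @ (if eproc (es!t) = p \<and> chist_ev (es!t) \<noteq> None then [es!t] else [])"
    unfolding cevents_def using t by (simp add: take_Suc_conv_app_nth)
  show ?case
  proof (cases "eproc (es!t) = p")
    case False
    then show ?thesis using cs IH lst_other[OF t False] by simp
  next
    case True
    have st: "astep k (lst p t) (es!t) = Some (lst p (Suc t))" using t True by (rule lst_step)
    have app: "\<And>e. (\<forall>i<length (cevents p t @ [e]). even i \<longleftrightarrow> is_cinv ((cevents p t @ [e]) ! i)) =
         ((\<forall>i<length (cevents p t). even i \<longleftrightarrow> is_cinv (cevents p t ! i)) \<and> (even (length (cevents p t)) \<longleftrightarrow> is_cinv e))"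
      by (auto simp: nth_append less_Suc_eq)
    show ?thesis
    proof (cases "chist_ev (es!t) = None")
      case True
      then show ?thesis using cs IH astep_other_event_Idle[OF st] by simp
    next
      case False
      then show ?thesis using cs IH app astep_counter_event_Idle[OF st False] \<open>eproc (es!t) = p\<close> by simp
    qed
  qed
qed

lemma well_formed_chist: "well_formed (chist es)"
  unfolding well_formed_def chist_def Let_def filter_hproc_chist
proof (intro allI impI)
  fix p i
  assume i: "i < length (map (\<lambda>e. the (chist_ev e)) (filter (\<lambda>e. eproc e = p \<and> chist_ev e \<noteq> None) es))"
  have c: "cevents p (length es) = filter (\<lambda>e. eproc e = p \<and> chist_ev e \<noteq> None) es"
    unfolding cevents_def by simp
  note w = cevents_alternate[of "length es" p, unfolded c]
  have "filter (\<lambda>e. eproc e = p \<and> chist_ev e \<noteq> None) es ! i \<in> set (filter (\<lambda>e. eproc e = p \<and>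
    chist_ev e \<noteq> None) es)"
    using i by (intro nth_mem) simp
  then have "chist_ev (filter (\<lambda>e. eproc e = p \<and> chist_ev e \<noteq> None) es ! i) \<noteq> None" by simp
  then show "even i = is_HInv (map (\<lambda>e. the (chist_ev e)) (filter (\<lambda>e. eproc e = p \<and> chist_ev e \<noteq> None) es) ! i)"
    using w i is_HInv_chist_ev by simp
qed

end

context execution begin

abbreviation "mh \<equiv> mhist es"
abbreviation "ch \<equiv> chist es"
abbreviation "mP \<equiv> hpos mhist_ev es"
abbreviation "cP \<equiv> hpos chist_ev es"
abbreviation "midx \<equiv> hidx mhist_ev es"
abbreviation "cidx \<equiv> hidx chist_ev es"

lemma mh_conv_mP: "mh = map (\<lambda>t. the (mhist_ev (es!t))) mP"
  unfolding mhist_def by (rule map_filter_conv_hpos)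

lemma ch_conv_cP: "ch = map (\<lambda>t. the (chist_ev (es!t))) cP"
  unfolding chist_def by (rule map_filter_conv_hpos)

lemma length_mh: "length mh = length mP" by (simp add: mh_conv_mP)

lemma nth_mh: "x < length mP \<Longrightarrow> mh ! x = the (mhist_ev (es!(mP!x)))" by (simp add: mh_conv_mP)

lemma length_ch: "length ch = length cP" by (simp add: ch_conv_cP)

lemma nth_ch: "x < length cP \<Longrightarrow> ch ! x = the (chist_ev (es!(cP!x)))" by (simp add: ch_conv_cP)

lemma resp_at_mhist_iff: "j < length es \<Longrightarrow> mhist_ev (es!j) \<noteq> None \<Longrightarrow> l < length es \<Longrightarrow>
    mhist_ev (es!l) \<noteq> None \<Longrightarrow>
  resp_at mh (midx j) (midx l) \<longleftrightarrow>
     j < l \<and> is_HInv (the (mhist_ev (es!j))) \<and> \<not> is_HInv (the (mhist_ev (es!l))) \<and> eproc (es!l) = eproc (es!j) \<and>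
     (\<forall>x. j < x \<and> x < l \<and> mhist_ev (es!x) \<noteq> None \<longrightarrow> eproc (es!x) \<noteq> eproc (es!j))"
  unfolding mhist_def by (rule resp_at_map_filter_iff) (auto intro: hproc_mhist_ev)

lemma resp_at_chist_iff: "j < length es \<Longrightarrow> chist_ev (es!j) \<noteq> None \<Longrightarrow> l < length es \<Longrightarrow>
    chist_ev (es!l) \<noteq> None \<Longrightarrow>
  resp_at ch (cidx j) (cidx l) \<longleftrightarrow>
     j < l \<and> is_HInv (the (chist_ev (es!j))) \<and> \<not> is_HInv (the (chist_ev (es!l))) \<and> eproc (es!l) = eproc (es!j) \<and>
     (\<forall>x. j < x \<and> x < l \<and> chist_ev (es!x) \<noteq> None \<longrightarrow> eproc (es!x) \<noteq> eproc (es!j))"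
  unfolding chist_def by (rule resp_at_map_filter_iff) (auto intro: hproc_chist_ev)

definition has_next_cev :: "nat \<Rightarrow> nat \<Rightarrow> bool" where
  "has_next_cev p t \<longleftrightarrow> (\<exists>x. t < x \<and> x < length es \<and> eproc (es!x) = p \<and> chist_ev (es!x) \<noteq> None)"

definition next_cev :: "nat \<Rightarrow> nat \<Rightarrow> nat" where
  "next_cev p t = (LEAST x. t < x \<and> x < length es \<and> eproc (es!x) = p \<and> chist_ev (es!x) \<noteq> None)"

lemma next_cev: assumes "has_next_cev p t"
  shows "t < next_cev p t" "next_cev p t < length es" "eproc (es!next_cev p t) = p" "chist_ev (es!next_cev p t) \<noteq> None"
    "\<And>x. t < x \<Longrightarrow> x < next_cev p t \<Longrightarrow> eproc (es!x) = p \<Longrightarrow> chist_ev (es!x) = None"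
proof -
  let ?P = "\<lambda>x. t < x \<and> x < length es \<and> eproc (es!x) = p \<and> chist_ev (es!x) \<noteq> None"
  have "?P (next_cev p t)" using assms unfolding has_next_cev_def next_cev_def by (rule LeastI_ex)
  then show "t < next_cev p t" "next_cev p t < length es" "eproc (es!next_cev p t) = p" "chist_ev (es!next_cev p t) \<noteq> None" by auto
  fix x assume x: "t < x" "x < next_cev p t" "eproc (es!x) = p"
  have "\<not> ?P x" using x(2) unfolding next_cev_def by (rule not_less_Least)
  then show "chist_ev (es!x) = None" using x \<open>?P (next_cev p t)\<close> by auto
qed

lemma next_cev_le: "t < x \<Longrightarrow> x < length es \<Longrightarrow> eproc (es!x) = p \<Longrightarrow>
    chist_ev (es!x) \<noteq> None \<Longrightarrow> has_next_cev p t \<and> next_cev p t \<le> x"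
  unfolding has_next_cev_def next_cev_def by (auto intro: Least_le)

lemma chist_ev_not_MStep: "chist_ev e \<noteq> None \<Longrightarrow> e \<noteq> MStep p" by auto

lemma resp_at_mhist_next_step: assumes "es!s = MWInv p v \<or> es!s = MRInv p" "s < length es" "has_next p s"
  shows "resp_at mh (midx s) (midx (next_step p s)) \<and> ((es!s = MWInv p v \<longrightarrow> es!(next_step p s) = MWResp p) \<and>
     (es!s = MRInv p \<longrightarrow> (\<exists>r. es!(next_step p s) = MRResp p r)))"
proof -
  note N = next_step[OF assms(3)]
  have r: "(es!s = MWInv p v \<longrightarrow> es!(next_step p s) = MWResp p) \<and>
    (es!s = MRInv p \<longrightarrow> (\<exists>r. es!(next_step p s) = MRResp p r))"
    using next_after_MWInv[OF _ assms(2,3)] next_after_MRInv[OF _ assms(2,3)] by blast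
  then have mm: "mhist_ev (es!next_step p s) \<noteq> None" "\<not> is_HInv (the (mhist_ev (es!next_step p s)))"
    using assms(1) by auto
  have ms: "mhist_ev (es!s) \<noteq> None" "is_HInv (the (mhist_ev (es!s)))" "eproc (es!s) = p"
    using assms(1) by auto
  have "resp_at mh (midx s) (midx (next_step p s))"
    apply (subst resp_at_mhist_iff[OF assms(2) ms(1) N(2) mm(1)])
    using N ms mm by (fastforce)
  then show ?thesis using r by blast
qed

lemma increment_shape: assumes "es!i = InvInc p" "i < length es" "has_next_cev p i"
  shows "has_next p i \<and> es!(next_cev p i) = RespInc p \<and>
    ((es!(next_step p i) = RespInc p \<and> next_step p i = next_cev p i \<and> phase (lst p (next_step p i)) = IncStart) \<or>
     (\<exists>v. es!(next_step p i) = MWInv p v \<and> has_next p (next_step p i) \<and> es!(next_step p (next_step p i)) = MWResp p \<and> next_step p (next_step p i) < next_cev p i))"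
proof -
  note F = next_cev[OF assms(3)]
  have hN: "has_next p i" "next_step p i \<le> next_cev p i"
    using next_step_le[of i "next_cev p i" p] F chist_ev_not_MStep[OF F(4)] by auto
  note N = next_step[OF hN(1)]
  from next_after_InvInc[OF assms(1,2) hN(1)] show ?thesis
  proof
    assume v: "\<exists>v. es!(next_step p i) = MWInv p v"
    then obtain v where v: "es!(next_step p i) = MWInv p v" by blast
    have "next_step p i \<noteq> next_cev p i" using v F(4) by auto
    then have lt: "next_step p i < next_cev p i" using hN(2) by simp
    have h2: "has_next p (next_step p i)" "next_step p (next_step p i) \<le> next_cev p i"
      using next_step_le[of "next_step p i" "next_cev p i" p] F lt chist_ev_not_MStep[OF F(4)] by auto
    have mr: "es!(next_step p (next_step p i)) = MWResp p" using next_after_MWInv[OF v N(2) h2(1)] .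
    have "next_step p (next_step p i) \<noteq> next_cev p i" using mr F(4) by auto
    then have lt2: "next_step p (next_step p i) < next_cev p i" using h2(2) by simp
    note N2 = next_step[OF h2(1)]
    have h3: "has_next p (next_step p (next_step p i))" "next_step p (next_step p (next_step p i)) \<le> next_cev p i"
      using next_step_le[of "next_step p (next_step p i)" "next_cev p i" p] F lt2 chist_ev_not_MStep[OF F(4)] by auto
    note N3 = next_step[OF h3(1)]
    have ri: "es!(next_step p (next_step p (next_step p i))) = RespInc p"
      using next_after_MWResp[OF mr N2(2) h3(1)] .
    have "next_step p (next_step p (next_step p i)) = next_cev p i"
    proof (rule ccontr)
      assume "next_step p (next_step p (next_step p i)) \<noteq> next_cev p i"
      then have "next_step p (next_step p (next_step p i)) < next_cev p i" using h3(2) by simp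
      moreover have "i < next_step p (next_step p (next_step p i))" using N N2 N3 by linarith
      ultimately show False using F(5) N3(3) ri by fastforce
    qed
    then show ?thesis using hN v h2 mr lt2 ri by auto
  next
    assume r: "es!(next_step p i) = RespInc p \<and> phase (lst p (next_step p i)) = IncStart"
    have "next_step p i = next_cev p i"
    proof (rule ccontr)
      assume "next_step p i \<noteq> next_cev p i"
      then have "next_step p i < next_cev p i" using hN(2) by simp
      then show False using F(5) N r by fastforce
    qed
    then show ?thesis using hN r by auto
  qed
qed

lemma read_shape: assumes "es!i = InvRead p" "i < length es" "has_next_cev p i"
  shows "\<exists>r. has_next p i \<and> es!(next_step p i) = MRInv p \<and> has_next p (next_step p i) \<and>
    es!(next_step p (next_step p i)) = MRResp p r \<and>
     next_step p (next_step p i) < next_cev p i \<and> es!(next_cev p i) = RespRead p (if r \<ge> 0 then k * 2 ^ nat r else 0)"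
proof -
  note F = next_cev[OF assms(3)]
  have hN: "has_next p i" "next_step p i \<le> next_cev p i"
    using next_step_le[of i "next_cev p i" p] F chist_ev_not_MStep[OF F(4)] by auto
  note N = next_step[OF hN(1)]
  have v: "es!(next_step p i) = MRInv p" using next_after_InvRead[OF assms(1,2) hN(1)] .
  have "next_step p i \<noteq> next_cev p i" using v F(4) by auto
  then have lt: "next_step p i < next_cev p i" using hN(2) by simp
  have h2: "has_next p (next_step p i)" "next_step p (next_step p i) \<le> next_cev p i"
    using next_step_le[of "next_step p i" "next_cev p i" p] F lt chist_ev_not_MStep[OF F(4)] by auto
  obtain r where mr: "es!(next_step p (next_step p i)) = MRResp p r"
    using next_after_MRInv[OF v N(2) h2(1)] by blast
  have "next_step p (next_step p i) \<noteq> next_cev p i" using mr F(4) by auto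
  then have lt2: "next_step p (next_step p i) < next_cev p i" using h2(2) by simp
  note N2 = next_step[OF h2(1)]
  have h3: "has_next p (next_step p (next_step p i))" "next_step p (next_step p (next_step p i)) \<le> next_cev p i"
    using next_step_le[of "next_step p (next_step p i)" "next_cev p i" p] F lt2 chist_ev_not_MStep[OF F(4)] by auto
  note N3 = next_step[OF h3(1)]
  have ri: "es!(next_step p (next_step p (next_step p i))) = RespRead p (if r \<ge> 0 then k * 2 ^ nat r else 0)"
    using next_after_MRResp[OF mr N2(2) h3(1)] .
  have "next_step p (next_step p (next_step p i)) = next_cev p i"
  proof (rule ccontr)
    assume "next_step p (next_step p (next_step p i)) \<noteq> next_cev p i"
    then have "next_step p (next_step p (next_step p i)) < next_cev p i" using h3(2) by simp
    moreover have "i < next_step p (next_step p (next_step p i))" using N N2 N3 by linarith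
    ultimately show False using F(5) N3(3) ri by fastforce
  qed
  then show ?thesis using hN v h2 mr lt2 ri by auto
qed

end

section \<open>Linearizing the counter\<close>

fun res_val :: "('a, 'r) hev \<Rightarrow> 'r" where "res_val (HRes _ x) = x"

lemma HRes_res_val: "\<not> is_HInv h \<Longrightarrow> h = HRes (hproc h) (res_val h)" by (cases h) auto

lemma mhist_ev_chist_ev_disj: "mhist_ev e \<noteq> None \<Longrightarrow> chist_ev e = None" by (cases e) auto

lemma mhist_ev_MW: "mhist_ev e \<noteq> None \<Longrightarrow> inv_arg (the (mhist_ev e)) = MW v \<Longrightarrow>
    is_HInv (the (mhist_ev e)) \<Longrightarrow>
   e = MWInv (eproc e) v"
  by (cases e) auto

text \<open>The witnesses of \<open>linearizable maxreg_legal (mhist es)\<close>: \<open>mlin\<close> lists positions in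
  \<open>mhist es\<close>, and \<open>mret\<close> assigns the responses.\<close>
locale lin_execution = execution n k es for n k es +
  fixes mlin :: "nat list" and mret :: "nat \<Rightarrow> mres"
  assumes mlin_distinct: "distinct mlin"
    and mlin_inv: "\<forall>i\<in>set mlin. op_inv (mhist es) i"
    and mlin_complete: "\<forall>i j. resp_at (mhist es) i j \<longrightarrow> i \<in> set mlin \<and>
      mhist es ! j = HRes (hproc (mhist es ! i)) (mret i)"
    and mlin_real_time: "\<forall>a b. a < length mlin \<longrightarrow> b < length mlin \<longrightarrow> (\<exists>j. resp_at (mhist es) (mlin!b) j \<and> j < mlin!a) \<longrightarrow> b < a"
    and mlin_legal: "maxreg_legal (map (\<lambda>i. (inv_arg (mhist es ! i), mret i)) mlin)"
begin

abbreviation "mseq \<equiv> map (\<lambda>i. (inv_arg (mhist es ! i), mret i)) mlin"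

lemma mlin_elem: "x \<in> set mlin \<Longrightarrow> x < length mP \<and> is_HInv (mh!x)"
  using mlin_inv length_mh unfolding op_inv_def by auto

definition horizon :: "nat \<Rightarrow> nat" where
  "horizon a = Max ((\<lambda>a'. mP ! (mlin ! a')) ` {..a})"

lemma horizon_ge: "a' \<le> a \<Longrightarrow> mP!(mlin!a') \<le> horizon a"
  unfolding horizon_def by (rule Max_ge) auto

lemma horizon_attained: "\<exists>a0\<le>a. horizon a = mP!(mlin!a0)"
proof -
  have "horizon a \<in> (\<lambda>a'. mP ! (mlin ! a')) ` {..a}" unfolding horizon_def by (rule Max_in) auto
  then show ?thesis by auto
qed

lemma horizon_mono: "a \<le> a' \<Longrightarrow> horizon a \<le> horizon a'"
  using horizon_attained[of a] horizon_ge[of _ a'] by (metis order_trans)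

lemma horizon_less_resp: assumes "a < length mlin" "resp_at mh (mlin!a) y" shows "horizon a < mP!y"
proof -
  obtain a0 where a0: "a0 \<le> a" "horizon a = mP!(mlin!a0)" using horizon_attained by blast
  have a0l: "a0 < length mlin" using a0 assms by simp
  then have x: "mlin!a0 < length mP" "is_HInv (mh!(mlin!a0))" using mlin_elem by auto
  have y: "y < length mP" "\<not> is_HInv (mh!y)" using assms(2) length_mh unfolding resp_at_def by auto
  have ne: "mlin!a0 \<noteq> y" using x y by auto
  have "\<not> y < mlin!a0"
  proof
    assume "y < mlin!a0"
    then have "a < a0" using mlin_real_time a0l assms by blast
    then show False using a0 by simp
  qed
  then have "mlin!a0 < y" using ne by simp
  then show ?thesis using a0 hpos_mono[of "mlin!a0" y] y by simp
qed

definition mlin_pos :: "nat \<Rightarrow> nat" where "mlin_pos x = (THE a. a < length mlin \<and> mlin!a = x)"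

lemma mlin_pos: "x \<in> set mlin \<Longrightarrow> mlin_pos x < length mlin \<and> mlin!(mlin_pos x) = x"
  unfolding mlin_pos_def by (rule theI') (rule distinct_Ex1[OF mlin_distinct])

lemma mlin_pos_nth: "a < length mlin \<Longrightarrow> mlin_pos (mlin!a) = a"
  unfolding mlin_pos_def by (rule the_equality) (auto simp: mlin_distinct nth_eq_iff_index_eq)

lemma finite_mr_writes: "finite (mr_writes s)"
proof -
  have "mr_writes s \<subseteq> (\<lambda>x. case fst x of MW v \<Rightarrow> v | MR \<Rightarrow> 0) ` set s"
  proof
    fix v assume "v \<in> mr_writes s"
    then obtain r where "(MW v, r) \<in> set s" unfolding mr_writes_def by blast
    then show "v \<in> (\<lambda>x. case fst x of MW v \<Rightarrow> v | MR \<Rightarrow> 0) ` set s"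
      by (rule rev_image_eqI) simp
  qed
  then show ?thesis by (rule finite_subset) simp
qed

lemma mr_writes_take_mseq: "mr_writes (take a mseq) = {v. \<exists>a'<a. a' < length mlin \<and> inv_arg (mh!(mlin!a')) = MW v}"
proof (intro set_eqI iffI)
  fix v assume "v \<in> mr_writes (take a mseq)"
  then obtain r where "(MW v, r) \<in> set (take a mseq)" by (auto simp: mr_writes_def)
  then obtain a' where a': "a' < length (take a mseq)" "take a mseq ! a' = (MW v, r)" by (auto simp: in_set_conv_nth)
  then have "a' < a" "a' < length mlin" by auto
  moreover have "inv_arg (mh!(mlin!a')) = MW v" using a' calculation by simp
  ultimately show "v \<in> {v. \<exists>a'<a. a' < length mlin \<and> inv_arg (mh!(mlin!a')) = MW v}" by blast
next
  fix v assume "v \<in> {v. \<exists>a'<a. a' < length mlin \<and> inv_arg (mh!(mlin!a')) = MW v}"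
  then obtain a' where a': "a' < a" "a' < length mlin" "inv_arg (mh!(mlin!a')) = MW v" by blast
  then have "take a mseq ! a' = (MW v, mret (mlin!a'))" by simp
  moreover have "a' < length (take a mseq)" using a' by simp
  ultimately have "(MW v, mret (mlin!a')) \<in> set (take a mseq)" by (metis nth_mem)
  then show "v \<in> mr_writes (take a mseq)" by (auto simp: mr_writes_def)
qed

lemma mret_legal: "a < length mlin \<Longrightarrow>
   mret (mlin!a) = (case inv_arg (mh!(mlin!a)) of MW v \<Rightarrow> MAck | MR \<Rightarrow> MVal (mr_value (take a mseq)))"
  using mlin_legal unfolding maxreg_legal_def by auto

lemma mr_value_ge_write: assumes "a' < a" "a' < length mlin" "inv_arg (mh!(mlin!a')) = MW v"
  shows "mr_value (take a mseq) \<ge> v"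
proof -
  have "v \<in> mr_writes (take a mseq)" unfolding mr_writes_take_mseq using assms by blast
  then show ?thesis unfolding mr_value_def using finite_mr_writes by auto
qed

definition inv_pos :: "nat \<Rightarrow> nat" where
  "inv_pos c = cP ! c"

definition cproc :: "nat \<Rightarrow> nat" where
  "cproc c = eproc (es!(inv_pos c))"

definition is_inc :: "nat \<Rightarrow> bool" where
  "is_inc c \<longleftrightarrow> (\<exists>p. es!(inv_pos c) = InvInc p)"

definition complete :: "nat \<Rightarrow> bool" where
  "complete c \<longleftrightarrow> (\<exists>d. resp_at ch c d)"

text \<open>The MaxWrite or MaxRead performed by the counter operation \<open>c\<close> has been linearized,
  as entry \<open>sub_pos c\<close> of \<open>mlin\<close>.\<close>
definition has_lin_sub :: "nat \<Rightarrow> bool" where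
  "has_lin_sub c \<longleftrightarrow> has_next (cproc c) (inv_pos c) \<and> is_minv (es!(next_step (cproc c) (inv_pos c))) \<and>
     midx (next_step (cproc c) (inv_pos c)) \<in> set mlin"

definition sub_pos :: "nat \<Rightarrow> nat" where
  "sub_pos c = mlin_pos (midx (next_step (cproc c) (inv_pos c)))"

definition key :: "nat \<Rightarrow> nat \<times> nat" where
  "key c = (if has_lin_sub c then (horizon (sub_pos c), sub_pos c) else (inv_pos c, 0))"

definition lin_ops :: "nat set" where
  "lin_ops = {c. c < length ch \<and> is_HInv (ch!c) \<and> (complete c \<or> (is_inc c \<and> has_lin_sub c))}"

lemma inv_pos_facts: assumes "c < length ch" "is_HInv (ch!c)"
  shows "inv_pos c < length es \<and> chist_ev (es!(inv_pos c)) \<noteq> None \<and> (es!(inv_pos c) = InvInc (cproc c) \<or>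
    es!(inv_pos c) = InvRead (cproc c))"
proof -
  have c: "c < length cP" using assms length_ch by simp
  note pn = hpos_nth[OF c]
  have "is_HInv (the (chist_ev (es!(inv_pos c))))" using assms nth_ch c unfolding inv_pos_def by simp
  then show ?thesis using pn unfolding inv_pos_def cproc_def by (cases "es!(cP!c)") auto
qed

lemma inv_pos_cidx: "t < length es \<Longrightarrow> chist_ev (es!t) \<noteq> None \<Longrightarrow> inv_pos (cidx t) = t \<and> cidx t < length ch"
  using hpos_hidx[of t es chist_ev] length_ch unfolding inv_pos_def by simp

lemma cidx_inv_pos: "c < length ch \<Longrightarrow> cidx (inv_pos c) = c"
  using hidx_hpos[of c chist_ev es] length_ch unfolding inv_pos_def by simp

lemma inv_pos_inj: "c < length ch \<Longrightarrow> c' < length ch \<Longrightarrow> inv_pos c = inv_pos c' \<Longrightarrow> c = c'"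
  by (metis cidx_inv_pos)

lemma inv_pos_mono: "c < c' \<Longrightarrow> c' < length ch \<Longrightarrow> inv_pos c < inv_pos c'"
  using hpos_mono[of c c' chist_ev es] length_ch unfolding inv_pos_def by simp

lemma lin_sub_facts: assumes "has_lin_sub c"
  shows "next_step (cproc c) (inv_pos c) < length es \<and> inv_pos c < next_step (cproc c) (inv_pos c) \<and> sub_pos c < length mlin \<and>
     mlin!(sub_pos c) = midx (next_step (cproc c) (inv_pos c)) \<and> mP!(mlin!(sub_pos c)) = next_step (cproc c) (inv_pos c) \<and>
     mP ! midx (next_step (cproc c) (inv_pos c)) = next_step (cproc c) (inv_pos c) \<and>
     eproc (es!next_step (cproc c) (inv_pos c)) = cproc c \<and> mhist_ev (es!next_step (cproc c) (inv_pos c)) \<noteq> None"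
proof -
  let ?s = "next_step (cproc c) (inv_pos c)"
  have h: "has_next (cproc c) (inv_pos c)" "is_minv (es!?s)" "midx ?s \<in> set mlin"
    using assms unfolding has_lin_sub_def by auto
  note N = next_step[OF h(1)]
  have mm: "mhist_ev (es!?s) \<noteq> None" using h(2) unfolding is_minv_def by auto
  note P = mlin_pos[OF h(3)]
  show ?thesis using N mm P hpos_hidx[of ?s es mhist_ev] unfolding sub_pos_def by simp
qed

lemma inv_pos_le_key: assumes "c < length ch" "is_HInv (ch!c)" shows "inv_pos c \<le> fst (key c)"
proof (cases "has_lin_sub c")
  case True
  note S = lin_sub_facts[OF True]
  have "mP!(mlin!(sub_pos c)) \<le> horizon (sub_pos c)" by (rule horizon_ge) simp
  then show ?thesis using S True unfolding key_def by simp
next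
  case False then show ?thesis unfolding key_def by simp
qed

lemma key_less_resp: assumes "resp_at ch B d" shows "fst (key B) < cP!d"
proof -
  have B: "B < length ch" "is_HInv (ch!B)" "B < d" "d < length ch"
    using assms unfolding resp_at_def op_inv_def by auto
  note cB = inv_pos_facts[OF B(1,2)]
  have dP: "d < length cP" using B length_ch by simp
  note pd = hpos_nth[OF dP]
  let ?u = "cP!d" and ?p = "cproc B"
  have cu: "cidx ?u = d" using hidx_hpos[OF dP] .
  have cb: "cidx (inv_pos B) = B" using cidx_inv_pos B by simp
  have R: "inv_pos B < ?u \<and> eproc (es!?u) = ?p \<and> (\<forall>x. inv_pos B < x \<and> x < ?u \<and>
    chist_ev (es!x) \<noteq> None \<longrightarrow> eproc (es!x) \<noteq> ?p)"
    using resp_at_chist_iff[of "inv_pos B" ?u] cB pd assms cu cb unfolding cproc_def by auto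
  show ?thesis
  proof (cases "has_lin_sub B")
    case False
    then show ?thesis using R unfolding key_def by simp
  next
    case True
    note S = lin_sub_facts[OF True]
    let ?s = "next_step ?p (inv_pos B)"
    have h: "has_next ?p (inv_pos B)" "is_minv (es!?s)" using True unfolding has_lin_sub_def by auto
    have uMS: "es!?u \<noteq> MStep ?p" using pd by auto
    have s_le: "?s \<le> ?u" using next_step_le[of "inv_pos B" ?u ?p] R pd uMS by auto
    have "?s \<noteq> ?u" using h(2) pd unfolding is_minv_def by auto
    then have s_lt: "?s < ?u" using s_le by simp
    have h2: "has_next ?p ?s" "next_step ?p ?s \<le> ?u" using next_step_le[of ?s ?u ?p] R pd s_lt uMS by auto
    obtain v where e: "es!?s = MWInv ?p v \<or> es!?s = MRInv ?p"
      using h(2) S unfolding is_minv_def by auto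
    have mr: "resp_at mh (midx ?s) (midx (next_step ?p ?s))"
      using resp_at_mhist_next_step[OF e _ h2(1)] S by blast
    have "next_step ?p ?s \<noteq> ?u"
      using resp_at_mhist_next_step[OF e _ h2(1)] S pd e by auto
    then have l_lt: "next_step ?p ?s < ?u" using h2 by simp
    have "horizon (sub_pos B) < mP!(midx (next_step ?p ?s))"
      using horizon_less_resp[of "sub_pos B"] S mr by simp
    moreover have "mP!(midx (next_step ?p ?s)) = next_step ?p ?s"
      using hpos_hidx[of "next_step ?p ?s" es mhist_ev] next_step[OF h2(1)] resp_at_mhist_next_step[OF e _ h2(1)] S e by auto
    ultimately show ?thesis using l_lt True unfolding key_def by simp
  qed
qed

lemma key_less_if_precedes: assumes "resp_at ch B d" "A < length ch" "is_HInv (ch!A)" "d < A" shows "key B < key A"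
proof -
  have "cP!d < cP!A" using hpos_mono[of d A chist_ev es] assms length_ch by simp
  then have "fst (key B) < fst (key A)"
    using key_less_resp[OF assms(1)] inv_pos_le_key[OF assms(2,3)] unfolding inv_pos_def by simp
  then show ?thesis by (simp add: less_prod_def)
qed

lemma horizon_ne_inv_pos:
  assumes "a < length mlin" "c < length ch" "is_HInv (ch!c)"
  shows "horizon a \<noteq> inv_pos c"
proof -
  obtain a0 where a0: "a0 \<le> a" "horizon a = mP!(mlin!a0)" using horizon_attained by blast
  then have "mlin!a0 < length mP" using assms(1) mlin_elem by simp
  then have "mhist_ev (es!(horizon a)) \<noteq> None" using hpos_nth[of "mlin!a0" mhist_ev es] a0(2) by simp
  moreover have "chist_ev (es!(inv_pos c)) \<noteq> None" using inv_pos_facts[OF assms(2,3)] by simp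
  ultimately show ?thesis using mhist_ev_chist_ev_disj by metis
qed

lemma key_inj:
  assumes c1: "c1 < length ch" "is_HInv (ch!c1)" and c2: "c2 < length ch" "is_HInv (ch!c2)"
    and eq: "key c1 = key c2"
  shows "c1 = c2"
proof -
  have "inv_pos c1 = inv_pos c2"
  proof (cases "has_lin_sub c1"; cases "has_lin_sub c2")
    assume h1: "has_lin_sub c1" and h2: "has_lin_sub c2"
    note S1 = lin_sub_facts[OF h1] and S2 = lin_sub_facts[OF h2]
    have "sub_pos c1 = sub_pos c2" using eq h1 h2 unfolding key_def by simp
    then have "midx (next_step (cproc c1) (inv_pos c1)) = midx (next_step (cproc c2) (inv_pos c2))"
      using S1 S2 by simp
    then have seq: "next_step (cproc c1) (inv_pos c1) = next_step (cproc c2) (inv_pos c2)"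
      using hidx_eq_iff[of "next_step (cproc c1) (inv_pos c1)" es mhist_ev "next_step (cproc c2) (inv_pos c2)"]
        S1 S2 by simp
    then have p: "cproc c2 = cproc c1" using S1 S2 by metis
    have hn: "has_next (cproc c1) (inv_pos c1)" "has_next (cproc c1) (inv_pos c2)"
      using h1 h2 p unfolding has_lin_sub_def by auto
    have e: "eproc (es!inv_pos c1) = cproc c1" "eproc (es!inv_pos c2) = cproc c1"
      using p unfolding cproc_def by simp_all
    have m: "es!inv_pos c1 \<noteq> MStep (cproc c1)" "es!inv_pos c2 \<noteq> MStep (cproc c1)"
      using inv_pos_facts[OF c1] inv_pos_facts[OF c2] by auto
    show ?thesis by (rule next_step_inj[OF hn seq[unfolded p] e m])
  next
    assume h1: "has_lin_sub c1" and h2: "\<not> has_lin_sub c2"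
    moreover have "fst (key c1) = fst (key c2)" using eq by simp
    ultimately have "horizon (sub_pos c1) = inv_pos c2" unfolding key_def by simp
    then show ?thesis using horizon_ne_inv_pos[OF _ c2] lin_sub_facts[OF h1] by blast
  next
    assume h1: "\<not> has_lin_sub c1" and h2: "has_lin_sub c2"
    moreover have "fst (key c1) = fst (key c2)" using eq by simp
    ultimately have "horizon (sub_pos c2) = inv_pos c1" unfolding key_def by simp
    then show ?thesis using horizon_ne_inv_pos[OF _ c1] lin_sub_facts[OF h2] by blast
  qed (use eq in \<open>simp add: key_def\<close>)
  then show ?thesis using inv_pos_inj c1 c2 by blast
qed

lemma finite_lin_ops: "finite lin_ops"
  by (rule finite_subset[of _ "{..<length ch}"]) (auto simp: lin_ops_def)

definition clin :: "nat list" where "clin = sort_key key (sorted_list_of_set lin_ops)"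

lemma set_clin: "set clin = lin_ops" unfolding clin_def using finite_lin_ops by simp

lemma distinct_clin: "distinct clin" unfolding clin_def using finite_lin_ops by simp

lemma sorted_key_clin: "sorted (map key clin)" unfolding clin_def by simp

lemma clin_elem: "c \<in> set clin \<Longrightarrow> c < length ch \<and> is_HInv (ch!c)"
  using set_clin unfolding lin_ops_def by auto

lemma key_clin_strict_mono: assumes "a < b" "b < length clin" shows "key (clin!a) < key (clin!b)"
proof -
  have le: "key (clin!a) \<le> key (clin!b)"
    using sorted_key_clin assms sorted_iff_nth_mono[of "map key clin"] by auto
  have ne: "clin!a \<noteq> clin!b" using distinct_clin assms by (simp add: nth_eq_iff_index_eq)
  have "clin!a \<in> set clin" "clin!b \<in> set clin" using assms by auto
  then have "key (clin!a) \<noteq> key (clin!b)" using key_inj clin_elem ne by blast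
  then show ?thesis using le by simp
qed

lemma clin_index_less: assumes "a < length clin" "b < length clin" "key (clin!b) < key (clin!a)" shows "b < a"
proof (rule ccontr)
  assume "\<not> b < a"
  then consider "a = b" | "a < b" by linarith
  then show False
  proof cases
    case 1 then show False using assms by simp
  next
    case 2 then show False using key_clin_strict_mono[OF 2 assms(2)] assms(3) by simp
  qed
qed

definition cret :: "nat \<Rightarrow> cres" where
  "cret c = (if complete c then res_val (ch ! (SOME d. resp_at ch c d)) else CAck)"

lemma clin_responses: "resp_at ch i j \<Longrightarrow> i \<in> set clin \<and> ch!j = HRes (hproc (ch!i)) (cret i)"
proof -
  assume r: "resp_at ch i j"
  then have "complete i" unfolding complete_def by blast
  moreover have "i < length ch" "is_HInv (ch!i)" using r unfolding resp_at_def op_inv_def by auto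
  ultimately have "i \<in> set clin" unfolding set_clin lin_ops_def by auto
  moreover have "(SOME d. resp_at ch i d) = j" using r resp_at_unique by (metis someI)
  then have "cret i = res_val (ch!j)" using \<open>complete i\<close> unfolding cret_def by simp
  moreover have "ch!j = HRes (hproc (ch!j)) (res_val (ch!j))"
    using r HRes_res_val unfolding resp_at_def by blast
  moreover have "hproc (ch!j) = hproc (ch!i)" using r unfolding resp_at_def by simp
  ultimately show ?thesis by simp
qed

lemma clin_real_time: assumes "a < length clin" "b < length clin" "resp_at ch (clin!b) j" "j < clin!a" shows "b < a"
proof -
  have "clin!a \<in> set clin" using assms by simp
  then have "key (clin!b) < key (clin!a)"
    using key_less_if_precedes[OF assms(3) _ _ assms(4)] clin_elem by blast
  then show ?thesis using clin_index_less assms by blast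
qed

end

section \<open>Accuracy of Reads\<close>

lemma accurate_power_of_two:
  fixes k :: real
  assumes k: "0 < k" "2 * real n \<le> k * k" and N: "2 ^ r \<le> N" "N \<le> n * 2 ^ (r + 1)"
  shows "real N / k \<le> k * 2 ^ r \<and> k * 2 ^ r \<le> k * real N"
proof
  have "real N \<le> real (n * 2 ^ (r + 1))" using N(2) by (simp only: of_nat_le_iff)
  also have "\<dots> = (2 * real n) * 2 ^ r" by simp
  also have "\<dots> \<le> (k * k) * 2 ^ r" using k(2) by (intro mult_right_mono) auto
  finally show "real N / k \<le> k * 2 ^ r"
    using k(1) by (simp add: divide_le_eq mult.commute mult.left_commute)
  have "real (2 ^ r) \<le> real N" using N(1) by (simp only: of_nat_le_iff)
  then have "(2::real) ^ r \<le> real N" by simp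
  then show "k * 2 ^ r \<le> k * real N" using k(1) by simp
qed

lemma sqrt_le_imp_square_le:
  fixes k :: real
  assumes "1 \<le> n" "sqrt (2 * real n) \<le> k"
  shows "0 < k \<and> 2 * real n \<le> k * k"
proof
  have s: "sqrt (2 * real n) > 0" using assms(1) by simp
  show "0 < k" using s assms(2) by linarith
  have "sqrt (2 * real n) * sqrt (2 * real n) \<le> k * k" using assms(2) s by (intro mult_mono) linarith+
  then show "2 * real n \<le> k * k" by simp
qed

context lin_execution begin

lemma resp_at_next_cev: assumes "resp_at ch c d"
  shows "has_next_cev (cproc c) (inv_pos c) \<and> next_cev (cproc c) (inv_pos c) = cP!d \<and> c < length ch \<and> is_HInv (ch!c)"
proof -
  have B: "c < length ch" "is_HInv (ch!c)" "c < d" "d < length ch"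
    using assms unfolding resp_at_def op_inv_def by auto
  note cB = inv_pos_facts[OF B(1,2)]
  have dP: "d < length cP" using B length_ch by simp
  note pd = hpos_nth[OF dP]
  let ?u = "cP!d" and ?p = "cproc c"
  have cu: "cidx ?u = d" using hidx_hpos[OF dP] .
  have cb: "cidx (inv_pos c) = c" using cidx_inv_pos B by simp
  have R: "inv_pos c < ?u \<and> eproc (es!?u) = ?p \<and> (\<forall>x. inv_pos c < x \<and> x < ?u \<and>
    chist_ev (es!x) \<noteq> None \<longrightarrow> eproc (es!x) \<noteq> ?p)"
    using resp_at_chist_iff[of "inv_pos c" ?u] cB pd assms cu cb unfolding cproc_def by auto
  have h: "has_next_cev ?p (inv_pos c)" "next_cev ?p (inv_pos c) \<le> ?u"
    using next_cev_le[of "inv_pos c" ?u ?p] R pd by auto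
  note F = next_cev[OF h(1)]
  have "next_cev ?p (inv_pos c) = ?u"
  proof (rule ccontr)
    assume "next_cev ?p (inv_pos c) \<noteq> ?u"
    then have "next_cev ?p (inv_pos c) < ?u" using h by simp
    then show False using R F by blast
  qed
  then show ?thesis using h B by simp
qed

lemma cproc_less: "c < length ch \<Longrightarrow> is_HInv (ch!c) \<Longrightarrow> cproc c < n"
  using inv_pos_facts eproc_less unfolding cproc_def by auto

lemma nth_mh_facts: "x < length mP \<Longrightarrow> mh!x = the (mhist_ev (es!(mP!x))) \<and> mP!x < length es \<and>
    mhist_ev (es!(mP!x)) \<noteq> None"
  using nth_mh hpos_nth by blast

lemma cidx_inc:
  assumes "t < length es" "es!t = InvInc q"
  shows "cidx t < length ch \<and> is_HInv (ch!cidx t) \<and> inv_pos (cidx t) = t \<and> is_inc (cidx t) \<and> cproc (cidx t) = q"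
  using assms inv_pos_cidx[of t] nth_ch[of "cidx t"] length_ch unfolding inv_pos_def is_inc_def cproc_def
  by auto

lemma key_less_earlier_inc:
  assumes t: "t < i" "es!t = InvInc q" and i: "i < length es" "es!i = InvInc q"
  shows "cidx t \<in> lin_ops \<and> key (cidx t) < key (cidx i)"
proof -
  have tl: "t < length es" using t i by simp
  have hc: "has_next_cev q t" "next_cev q t \<le> i" using next_cev_le[of t i q] t i by auto
  note FC = next_cev[OF hc(1)]
  have r: "es!(next_cev q t) = RespInc q" using increment_shape[OF t(2) tl hc(1)] by simp
  then have "next_cev q t \<noteq> i" using i(2) by auto
  then have "next_cev q t < i" using hc(2) by simp
  then have "cidx (next_cev q t) < cidx i" using hidx_less_iff[of "next_cev q t" es chist_ev i] FC i by simp
  moreover have rsp: "resp_at ch (cidx t) (cidx (next_cev q t))"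
    using resp_at_chist_iff[of t "next_cev q t"] tl FC t(2) r by auto
  ultimately have "key (cidx t) < key (cidx i)" using key_less_if_precedes cidx_inc[OF i] by blast
  moreover have "cidx t \<in> lin_ops"
    using rsp cidx_inc[OF tl t(2)] unfolding lin_ops_def complete_def by auto
  ultimately show ?thesis by simp
qed

lemma writer_increment:
  assumes a': "a' < length mlin" "inv_arg (mh!(mlin!a')) = MW r"
  obtains q i where "mP!(mlin!a') < length es" "es!(mP!(mlin!a')) = MWInv q r"
    "i < mP!(mlin!a')" "es!i = InvInc q" "only_internal q i (mP!(mlin!a'))"
    "key (cidx i) = (horizon a', a')" "cidx i \<in> lin_ops"
proof -
  let ?x = "mlin!a'"
  have x: "?x < length mP" "is_HInv (mh!?x)" using mlin_elem a' by auto
  note M = nth_mh_facts[OF x(1)]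
  let ?j = "mP!?x"
  define q where "q = eproc (es!?j)"
  have ej: "es!?j = MWInv q r" using mhist_ev_MW[of "es!?j" r] M x a' unfolding q_def by simp
  have jl: "?j < length es" using M by simp
  have st: "astep k (lst q ?j) (es!?j) = Some (lst q (Suc ?j))" using jl q_def by (intro lst_step) auto
  have phs: "phase (lst q ?j) = IncStart" using astep_MWInvD[OF st[unfolded ej]] by simp
  obtain i where i: "i < ?j" "es!i = InvInc q" "only_internal q i ?j"
    using trace_inv_lst[of ?j q] jl phs unfolding trace_inv_def by auto
  have hN: "has_next q i" "next_step q i \<le> ?j" using next_step_le[of i ?j q] i jl ej by auto
  have nx: "next_step q i = ?j"
  proof (rule ccontr)
    assume "next_step q i \<noteq> ?j"
    then have "next_step q i < ?j" using hN by simp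
    then show False using next_step[OF hN(1)] i(3) unfolding only_internal_def by blast
  qed
  have il: "i < length es" using i jl by simp
  note ci = cidx_inc[OF il i(2)]
  have mj: "midx ?j = ?x" using hidx_hpos[OF x(1)] .
  have ci': "inv_pos (cidx i) = i" "cproc (cidx i) = q" using ci by auto
  have hs: "has_lin_sub (cidx i)"
    unfolding has_lin_sub_def ci' nx mj using hN ej a' by (auto simp: is_minv_def)
  have "sub_pos (cidx i) = a'" unfolding sub_pos_def ci' nx mj using mlin_pos_nth a' by simp
  then have kc: "key (cidx i) = (horizon a', a')" using hs unfolding key_def by simp
  have "cidx i \<in> lin_ops" using hs ci unfolding lin_ops_def by auto
  with jl ej i kc show ?thesis by (rule that)
qed

lemma incs_before_read_ge:
  assumes a: "a < length mlin" and rr: "r = mr_value (take a mseq)" "r \<ge> 0"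
  shows "2 ^ nat r \<le> card {c\<in>lin_ops. is_inc c \<and> key c < (horizon a, a)}"
proof -
  let ?S = "{c\<in>lin_ops. is_inc c \<and> key c < (horizon a, a)}"
  have "r \<in> mr_writes (take a mseq)"
    using rr finite_mr_writes unfolding mr_value_def by (auto split: if_splits)
  then obtain a' where a': "a' < a" "a' < length mlin" "inv_arg (mh!(mlin!a')) = MW r"
    unfolding mr_writes_take_mseq by blast
  let ?j = "mP!(mlin!a')"
  obtain q i where w: "?j < length es" "es!?j = MWInv q r" "i < ?j" "es!i = InvInc q"
    "only_internal q i ?j" "key (cidx i) = (horizon a', a')" "cidx i \<in> lin_ops"
    using writer_increment[OF a'(2,3)] by blast
  have il: "i < length es" using w by simp
  have key_i: "key (cidx i) < (horizon a, a)" using w(6) horizon_mono[of a' a] a' by simp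
  let ?T = "{t. t < ?j \<and> es!t = InvInc q}"
  have "card ?T = 2 ^ nat r" using inc_count_card[of ?j q] inc_count_at_MWInv[OF w(2,1)] w(1) by simp
  moreover have inj: "inj_on cidx ?T"
  proof (rule inj_onI)
    fix x y assume "x \<in> ?T" "y \<in> ?T" "cidx x = cidx y"
    then show "x = y" using hidx_eq_iff[of x es chist_ev y] w(1) by auto
  qed
  moreover have img: "cidx ` ?T \<subseteq> ?S"
  proof
    fix c assume "c \<in> cidx ` ?T"
    then obtain t where t: "t < ?j" "es!t = InvInc q" "c = cidx t" by blast
    have "t \<le> i"
    proof (rule ccontr)
      assume "\<not> t \<le> i"
      then have "es!t = MStep q" using w(5) t unfolding only_internal_def by (metis eproc.simps(1) not_le)
      then show False using t(2) by simp
    qed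
    then consider "t = i" | "t < i" by linarith
    then show "c \<in> ?S"
    proof cases
      case 1 then show ?thesis using w key_i t cidx_inc[OF il w(4)] by simp
    next
      case 2 then show ?thesis
        using key_less_earlier_inc[OF 2 t(2) il w(4)] key_i t cidx_inc[of t q] w(1) by auto
    qed
  qed
  moreover have "finite ?S" using finite_lin_ops by simp
  ultimately show ?thesis using card_inj_on_le[OF inj img] by simp
qed

lemma mr_value_ge_completed_write:
  assumes w: "j0 < l0" "es!j0 = MWInv q v" "es!l0 = MWResp q" "only_internal q j0 l0"
    and a: "a < length mlin" "l0 < horizon a"
  shows "v \<le> mr_value (take a mseq)"
proof -
  obtain a0 where a0: "a0 \<le> a" "horizon a = mP!(mlin!a0)" using horizon_attained by blast
  have x0: "mlin!a0 < length mP" using a0 a mlin_elem by simp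
  note P0 = hpos_nth[OF x0]
  have l0l: "l0 < length es" "j0 < length es" using a(2) a0(2) P0 w(1) by simp_all
  have rm: "resp_at mh (midx j0) (midx l0)"
  proof (subst resp_at_mhist_iff)
    show "j0 < length es" "mhist_ev (es!j0) \<noteq> None" "l0 < length es" "mhist_ev (es!l0) \<noteq> None"
      using l0l w by auto
    show "j0 < l0 \<and> is_HInv (the (mhist_ev (es!j0))) \<and> \<not> is_HInv (the (mhist_ev (es!l0))) \<and>
        eproc (es!l0) = eproc (es!j0) \<and>
        (\<forall>x. j0 < x \<and> x < l0 \<and> mhist_ev (es!x) \<noteq> None \<longrightarrow> eproc (es!x) \<noteq> eproc (es!j0))"
      using w unfolding only_internal_def by fastforce
  qed
  then have inL: "midx j0 \<in> set mlin" using mlin_complete by blast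
  note PL = mlin_pos[OF inL]
  have "midx l0 < midx (mP!(mlin!a0))"
    using hidx_less_iff[of l0 es mhist_ev "mP!(mlin!a0)"] l0l w a a0 P0 by simp
  then have "midx l0 < mlin!a0" using hidx_hpos[OF x0] by simp
  moreover have "a0 < length mlin" using a0 a by simp
  ultimately have "mlin_pos (midx j0) < a0" using mlin_real_time PL rm by metis
  then have a1: "mlin_pos (midx j0) < a" using a0 by simp
  have ml: "midx j0 < length mP" using hpos_hidx[of j0 es mhist_ev] l0l w by simp
  have "mh!(mlin!mlin_pos (midx j0)) = HInv q (MW v)"
    using PL nth_mh_facts[OF ml] hpos_hidx[of j0 es mhist_ev] l0l w by simp
  then show ?thesis using mr_value_ge_write[OF a1] PL by simp
qed

lemma inc_count_before_key_lin_sub: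
  assumes c: "c \<in> lin_ops" "is_inc c" and kc: "key c < (horizon a, a)" and a: "a < length mlin"
    and rr: "r = mr_value (take a mseq)" and sub: "has_lin_sub c"
  shows "inc_count es (cproc c) (Suc (inv_pos c)) \<le> 2 ^ (nat r + 1) \<and> r \<ge> 0"
proof -
  let ?q = "cproc c" and ?i = "inv_pos c"
  have cl: "c < length ch" "is_HInv (ch!c)" using c unfolding lin_ops_def by auto
  note C = inv_pos_facts[OF cl]
  have ei: "es!?i = InvInc ?q" using C c(2) unfolding is_inc_def by auto
  have il: "?i < length es" using C by simp
  note S = lin_sub_facts[OF sub]
  let ?s = "next_step ?q ?i"
  have hN: "has_next ?q ?i" "is_minv (es!?s)" using sub unfolding has_lin_sub_def by auto
  obtain v where ev: "es!?s = MWInv ?q v"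
    using next_after_InvInc[OF ei il hN(1)] hN(2) unfolding is_minv_def by auto
  have kc': "key c = (horizon (sub_pos c), sub_pos c)" using sub unfolding key_def by simp
  have a'a: "sub_pos c < a"
  proof (rule ccontr)
    assume "\<not> sub_pos c < a"
    then have "horizon a \<le> horizon (sub_pos c)" using horizon_mono by simp
    then show False using kc kc' \<open>\<not> sub_pos c < a\<close> by auto
  qed
  have ml: "midx ?s < length mP" using hpos_hidx[of ?s es mhist_ev] S by simp
  have "mh!(mlin!(sub_pos c)) = HInv ?q (MW v)" using S nth_mh_facts[OF ml] ev by simp
  then have "inv_arg (mh!(mlin!(sub_pos c))) = MW v" by simp
  then have vr: "v \<le> r" using mr_value_ge_write[OF a'a] S rr by simp
  have F: "v \<ge> 0" "inc_count es ?q ?s = 2 ^ nat v" using inc_count_at_MWInv[OF ev] S by auto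
  have "inc_count es ?q (Suc ?i) = 2 ^ nat v" using inc_count_next_step[OF hN(1) il] F by simp
  moreover have "(2::nat) ^ nat v \<le> 2 ^ (nat r + 1)" using vr F(1) by (intro power_increasing) auto
  ultimately show ?thesis using vr F(1) by simp
qed

lemma inc_count_before_key_short:
  assumes c: "c \<in> lin_ops" "is_inc c" and kc: "key c < (horizon a, a)" and a: "a < length mlin"
    and rr: "r = mr_value (take a mseq)" and no_sub: "\<not> has_lin_sub c"
  shows "inc_count es (cproc c) (Suc (inv_pos c)) \<le> 2 ^ (nat r + 1) \<and> r \<ge> 0"
proof -
  let ?q = "cproc c" and ?i = "inv_pos c"
  have cl: "c < length ch" "is_HInv (ch!c)" using c unfolding lin_ops_def by auto
  note C = inv_pos_facts[OF cl]
  have ei: "es!?i = InvInc ?q" using C c(2) unfolding is_inc_def by auto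
  have il: "?i < length es" using C by simp
  have "complete c" using c no_sub unfolding lin_ops_def by auto
  then obtain d where d: "resp_at ch c d" unfolding complete_def by blast
  note RF = resp_at_next_cev[OF d]
  note IC = increment_shape[OF ei il conjunct1[OF RF]]
  let ?s = "next_step ?q ?i"
  have hN: "has_next ?q ?i" using IC by simp
  note N = next_step[OF hN]
  have rs: "es!?s = RespInc ?q \<and> phase (lst ?q ?s) = IncStart"
  proof -
    { fix v assume mw: "es!?s = MWInv ?q v" "has_next ?q ?s"
      have "resp_at mh (midx ?s) (midx (next_step ?q ?s))"
        using resp_at_mhist_next_step[of ?s ?q v] mw N by blast
      then have "midx ?s \<in> set mlin" using mlin_complete by blast
      then have "has_lin_sub c" unfolding has_lin_sub_def using hN mw by (simp add: is_minv_def)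
      then have False using no_sub by simp }
    then show ?thesis using IC by blast
  qed
  have F: "nextVal (lst ?q ?s) \<ge> 1" "inc_count es ?q ?s < 2 ^ nat (nextVal (lst ?q ?s))"
    using inc_count_at_short_RespInc[of ?s ?q] rs N by auto
  have cq: "inc_count es ?q (Suc ?i) = inc_count es ?q ?s" using inc_count_next_step[OF hN il] by simp
  have pse: "lst ?q (Suc ?i) = lst ?q ?s" using lst_next_step[OF hN] by simp
  let ?nv = "nextVal (lst ?q ?s)"
  have "trace_inv ?q (Suc ?i)" using trace_inv_lst il by simp
  then obtain j0 l0 where jl: "j0 < l0" "l0 < Suc ?i" "es!j0 = MWInv ?q (?nv - 1)" "es!l0 = MWResp ?q" "only_internal ?q j0 l0"
    unfolding trace_inv_def pse using rs F(1) by auto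
  have "l0 \<noteq> ?i" using jl ei by auto
  then have l0i: "l0 < ?i" using jl by simp
  have kc': "key c = (?i, 0)" using no_sub unfolding key_def by simp
  then have "l0 < horizon a" using kc l0i by auto
  then have nvr: "?nv - 1 \<le> r" using mr_value_ge_completed_write[OF jl(1,3-5) a] rr by simp
  have "nat ?nv \<le> nat r + 1" using nvr F(1) by linarith
  then have "(2::nat) ^ nat ?nv \<le> 2 ^ (nat r + 1)" by (intro power_increasing) auto
  then show ?thesis using cq F nvr by simp
qed

lemma inc_count_before_key:
  assumes c: "c \<in> lin_ops" "is_inc c" and kc: "key c < (horizon a, a)" and a: "a < length mlin"
    and rr: "r = mr_value (take a mseq)"
  shows "inc_count es (cproc c) (Suc (inv_pos c)) \<le> 2 ^ (nat r + 1) \<and> r \<ge> 0"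
  using inc_count_before_key_lin_sub[OF assms] inc_count_before_key_short[OF assms] by blast

lemma inv_pos_inc: "c \<in> lin_ops \<Longrightarrow> is_inc c \<Longrightarrow> es!(inv_pos c) = InvInc (cproc c)"
  using inv_pos_facts unfolding lin_ops_def is_inc_def by fastforce

lemma card_incs_of_proc_before: assumes a: "a < length mlin" and rr: "r = mr_value (take a mseq)"
  shows "card {c\<in>lin_ops. is_inc c \<and> key c < (horizon a, a) \<and> cproc c = q} \<le> 2 ^ (nat r + 1)"
proof (cases "{c\<in>lin_ops. is_inc c \<and> key c < (horizon a, a) \<and> cproc c = q} = {}")
  case True then show ?thesis by (simp only: card.empty)
next
  case False
  let ?card_incs_of_proc_before = "{c\<in>lin_ops. is_inc c \<and> key c < (horizon a, a) \<and> cproc c = q}"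
  have fin: "finite ?card_incs_of_proc_before" using finite_lin_ops by simp
  define cs where "cs = Max ?card_incs_of_proc_before"
  have cs: "cs \<in> ?card_incs_of_proc_before" unfolding cs_def using fin False by (rule Max_in)
  have csm: "\<And>c. c \<in> ?card_incs_of_proc_before \<Longrightarrow> c \<le> cs" unfolding cs_def
    using fin by (rule Max_ge)
  have csl: "cs < length ch" using cs unfolding lin_ops_def by auto
  have ipl: "inv_pos cs < length es" using inv_pos_facts cs unfolding lin_ops_def by auto
  have inj: "inj_on inv_pos ?card_incs_of_proc_before"
    using inv_pos_inj unfolding lin_ops_def by (intro inj_onI) auto
  have img: "inv_pos ` ?card_incs_of_proc_before \<subseteq> {t. t < Suc (inv_pos cs) \<and> es!t = InvInc q}"
  proof
    fix t assume "t \<in> inv_pos ` ?card_incs_of_proc_before"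
    then obtain c where c: "c \<in> ?card_incs_of_proc_before" "t = inv_pos c" by blast
    have "c \<le> cs" using csm c by simp
    then have "inv_pos c \<le> inv_pos cs" using inv_pos_mono[of c cs] csl by (cases "c = cs") auto
    moreover have "es!(inv_pos c) = InvInc q" using inv_pos_inc c by auto
    ultimately show "t \<in> {t. t < Suc (inv_pos cs) \<and> es!t = InvInc q}" using c by simp
  qed
  have "card ?card_incs_of_proc_before \<le> card {t. t < Suc (inv_pos cs) \<and> es!t = InvInc q}"
    by (rule card_inj_on_le[OF inj img]) simp
  also have "\<dots> = inc_count es q (Suc (inv_pos cs))"
    using inc_count_card[of "Suc (inv_pos cs)" q] ipl by simp
  also have "\<dots> \<le> 2 ^ (nat r + 1)" using inc_count_before_key[of cs a r] cs a rr by auto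
  finally show ?thesis .
qed

lemma incs_before_read_le: assumes a: "a < length mlin" and rr: "r = mr_value (take a mseq)"
  shows "card {c\<in>lin_ops. is_inc c \<and> key c < (horizon a, a)} \<le> n * 2 ^ (nat r + 1)"
proof -
  let ?S = "{c\<in>lin_ops. is_inc c \<and> key c < (horizon a, a)}"
  have eq: "?S = (\<Union>q\<in>{..<n}. {c\<in>lin_ops. is_inc c \<and> key c < (horizon a, a) \<and> cproc c = q})"
    using cproc_less unfolding lin_ops_def by auto
  have "card ?S \<le> (\<Sum>q\<in>{..<n}. card {c\<in>lin_ops. is_inc c \<and> key c < (horizon a, a) \<and> cproc c = q})"
    unfolding eq by (rule card_UN_le) simp
  also have "\<dots> \<le> card {..<n} * 2 ^ (nat r + 1)"
  proof -
    have "\<And>q. q \<in> {..<n} \<Longrightarrow> card {c\<in>lin_ops. is_inc c \<and> key c < (horizon a, a) \<and>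
      cproc c = q} \<le> 2 ^ (nat r + 1)"
      using card_incs_of_proc_before[OF a rr] by blast
    then show ?thesis
      using sum_bounded_above[of "{..<n}" "\<lambda>q. card {c\<in>lin_ops. is_inc c \<and> key c < (horizon a, a) \<and>
        cproc c = q}" "2 ^ (nat r + 1)"]
      by simp
  qed
  finally show ?thesis by simp
qed

lemma incs_before_read_empty: assumes a: "a < length mlin" and rr: "r = mr_value (take a mseq)" "r < 0"
  shows "card {c\<in>lin_ops. is_inc c \<and> key c < (horizon a, a)} = 0"
proof -
  have e: "{c\<in>lin_ops. is_inc c \<and> key c < (horizon a, a)} = {}"
    using inc_count_before_key[OF _ _ _ a rr(1)] rr(2) by fastforce
  show ?thesis unfolding e by simp
qed

lemma read_response: assumes c: "c \<in> lin_ops" "\<not> is_inc c"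
  shows "\<exists>r. has_lin_sub c \<and> sub_pos c < length mlin \<and> r = mr_value (take (sub_pos c) mseq) \<and>
     cret c = CVal (if r \<ge> 0 then k * 2 ^ nat r else 0)"
proof -
  let ?q = "cproc c" and ?i = "inv_pos c"
  have cl: "c < length ch" "is_HInv (ch!c)" using c unfolding lin_ops_def by auto
  note C = inv_pos_facts[OF cl]
  have ei: "es!?i = InvRead ?q" using C c(2) unfolding is_inc_def by auto
  have il: "?i < length es" using C by simp
  have "complete c" using c unfolding lin_ops_def by auto
  then obtain d where d: "resp_at ch c d" unfolding complete_def by blast
  note RF = resp_at_next_cev[OF d]
  obtain r where R: "has_next ?q ?i" "es!(next_step ?q ?i) = MRInv ?q" "has_next ?q (next_step ?q ?i)"
     "es!(next_step ?q (next_step ?q ?i)) = MRResp ?q r" "es!(next_cev ?q ?i) = RespRead ?q (if r \<ge> 0 then k * 2 ^ nat r else 0)"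
    using read_shape[OF ei il conjunct1[OF RF]] by blast
  let ?s = "next_step ?q ?i" let ?l = "next_step ?q ?s"
  note N1 = next_step[OF R(1)] and N2 = next_step[OF R(3)]
  have rm: "resp_at mh (midx ?s) (midx ?l)" using resp_at_mhist_next_step[of ?s ?q 0] R N1 by blast
  then have inL: "midx ?s \<in> set mlin" and mhl: "mh!(midx ?l) = HRes (hproc (mh!(midx ?s))) (mret (midx ?s))"
    using mlin_complete by blast+
  have ml: "midx ?l < length mP" "mP!(midx ?l) = ?l" using hpos_hidx[of ?l es mhist_ev] N2 R by auto
  have "mh!(midx ?l) = HRes ?q (MVal r)" using nth_mh_facts[OF ml(1)] ml(2) R by simp
  then have rv: "mret (midx ?s) = MVal r" using mhl by simp
  have hs: "has_lin_sub c" unfolding has_lin_sub_def using R inL by (simp add: is_minv_def)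
  note S = lin_sub_facts[OF hs]
  have ms: "midx ?s < length mP" "mP!(midx ?s) = ?s" using hpos_hidx[of ?s es mhist_ev] N1 R by auto
  have "mh!(mlin!(sub_pos c)) = HInv ?q MR" using S nth_mh_facts[OF ms(1)] ms(2) R by simp
  then have "mret (mlin!(sub_pos c)) = MVal (mr_value (take (sub_pos c) mseq))"
    using mret_legal[of "sub_pos c"] S by simp
  then have rr: "r = mr_value (take (sub_pos c) mseq)" using rv S by simp
  have "(SOME d. resp_at ch c d) = d" using d resp_at_unique by (metis someI)
  then have "cret c = res_val (ch!d)" using \<open>complete c\<close> unfolding cret_def by simp
  also have "ch!d = the (chist_ev (es!(cP!d)))" using nth_ch d length_ch unfolding resp_at_def by simp
  finally have "cret c = CVal (if r \<ge> 0 then k * 2 ^ nat r else 0)" using RF R by simp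
  then show ?thesis using rr hs S by blast
qed

lemma cret_inc: assumes c: "c \<in> lin_ops" "is_inc c" shows "cret c = CAck"
proof (cases "complete c")
  case True
  let ?q = "cproc c" and ?i = "inv_pos c"
  have cl: "c < length ch" "is_HInv (ch!c)" using c unfolding lin_ops_def by auto
  note C = inv_pos_facts[OF cl]
  have ei: "es!?i = InvInc ?q" using inv_pos_inc c by simp
  have il: "?i < length es" using C by simp
  obtain d where d: "resp_at ch c d" using True unfolding complete_def by blast
  note RF = resp_at_next_cev[OF d]
  have "es!(next_cev ?q ?i) = RespInc ?q" using increment_shape[OF ei il conjunct1[OF RF]] by simp
  have "(SOME d. resp_at ch c d) = d" using d resp_at_unique by (metis someI)
  then have "cret c = res_val (ch!d)" using True unfolding cret_def by simp
  also have "ch!d = the (chist_ev (es!(cP!d)))" using nth_ch d length_ch unfolding resp_at_def by simp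
  finally show ?thesis using RF \<open>es!(next_cev ?q ?i) = RespInc ?q\<close> by simp
next
  case False then show ?thesis unfolding cret_def by simp
qed

lemma inv_arg_ch: "c \<in> lin_ops \<Longrightarrow> inv_arg (ch!c) = (if is_inc c then CInc else CRead)"
proof -
  assume c: "c \<in> lin_ops"
  then have cl: "c < length ch" "is_HInv (ch!c)" unfolding lin_ops_def by auto
  note C = inv_pos_facts[OF cl]
  have e: "ch!c = the (chist_ev (es!(inv_pos c)))" using nth_ch cl length_ch unfolding inv_pos_def by simp
  show ?thesis unfolding e using C unfolding is_inc_def by auto
qed

abbreviation "cseq \<equiv> map (\<lambda>i. (inv_arg (ch!i), cret i)) clin"

lemma num_inc_take_cseq: assumes j: "j < length clin"
  shows "num_inc (take j cseq) = card {c\<in>lin_ops. is_inc c \<and> key c < key (clin!j)}"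
proof -
  have "num_inc (take j cseq) = card {b. b < j \<and> is_inc (clin!b)}"
    unfolding num_inc_def length_filter_conv_card
  proof (rule arg_cong[where f=card])
    show "{i. i < length (take j cseq) \<and> fst (take j cseq ! i) = CInc} = {b. b < j \<and> is_inc (clin!b)}"
    proof -
      have m: "\<And>b. b < j \<Longrightarrow> clin!b \<in> lin_ops"
        using j set_clin by (metis nth_mem less_trans)
      show ?thesis using j inv_arg_ch[OF m] by (auto split: if_splits)
    qed
  qed
  also have "\<dots> = card ((!) clin ` {b. b < j \<and> is_inc (clin!b)})"
    by (rule card_image[symmetric]) (rule inj_on_nth, use distinct_clin j in auto)
  also have "(!) clin ` {b. b < j \<and> is_inc (clin!b)} = {c\<in>lin_ops. is_inc c \<and> key c < key (clin!j)}"
  proof (intro set_eqI iffI)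
    fix c assume "c \<in> (!) clin ` {b. b < j \<and> is_inc (clin!b)}"
    then obtain b where b: "b < j" "is_inc (clin!b)" "c = clin!b" by blast
    have "clin!b \<in> lin_ops" using b j set_clin by (metis nth_mem less_trans)
    then show "c \<in> {c\<in>lin_ops. is_inc c \<and> key c < key (clin!j)}"
      using key_clin_strict_mono[OF b(1) j] b by simp
  next
    fix c assume "c \<in> {c\<in>lin_ops. is_inc c \<and> key c < key (clin!j)}"
    then have c: "c \<in> set clin" "is_inc c" "key c < key (clin!j)" using set_clin by auto
    then obtain b where b: "b < length clin" "clin!b = c" by (auto simp: in_set_conv_nth)
    then have "b < j" using clin_index_less[OF j b(1)] c by simp
    then show "c \<in> (!) clin ` {b. b < j \<and> is_inc (clin!b)}" using b c by auto
  qed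
  finally show ?thesis .
qed

lemma counter_legal_cseq:
  assumes k: "0 < k" "2 * real n \<le> k * k"
  shows "counter_legal k cseq"
  unfolding counter_legal_def
proof (intro allI impI)
  fix j assume jl: "j < length cseq"
  then have j: "j < length clin" by simp
  let ?c = "clin!j"
  have "?c \<in> set clin" using j by (rule nth_mem)
  then have cR: "?c \<in> lin_ops" by (simp only: set_clin)
  show "case fst (cseq ! j) of CInc \<Rightarrow> snd (cseq ! j) = CAck
        | CRead \<Rightarrow> \<exists>x. snd (cseq ! j) = CVal x \<and> real (num_inc (take j cseq)) / k \<le> x \<and> x \<le> k * real (num_inc (take j cseq))"
  proof (cases "is_inc ?c")
    case True
    then show ?thesis using j inv_arg_ch[OF cR] cret_inc[OF cR] by simp
  next
    case False
    obtain r where R: "has_lin_sub ?c" "sub_pos ?c < length mlin" "r = mr_value (take (sub_pos ?c) mseq)"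
      "cret ?c = CVal (if r \<ge> 0 then k * 2 ^ nat r else 0)" using read_response[OF cR False] by blast
    let ?a = "sub_pos ?c"
    have kc: "key ?c = (horizon ?a, ?a)" using R unfolding key_def by simp
    define N where "N = num_inc (take j cseq)"
    have N: "N = card {c\<in>lin_ops. is_inc c \<and> key c < (horizon ?a, ?a)}"
      unfolding N_def num_inc_take_cseq[OF j] kc ..
    have "real N / k \<le> (if r \<ge> 0 then k * 2 ^ nat r else 0) \<and> (if r \<ge> 0 then k * 2 ^ nat r else 0) \<le> k * real N"
    proof (cases "r \<ge> 0")
      case True
      then show ?thesis
        using accurate_power_of_two[OF k] incs_before_read_ge[OF R(2,3) True]
          incs_before_read_le[OF R(2,3)] N by simp
    next
      case False
      then show ?thesis using incs_before_read_empty[OF R(2,3)] N by simp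
    qed
    then show ?thesis using j inv_arg_ch[OF cR] False R(4) unfolding N_def by simp
  qed
qed

theorem chist_linearizable:
  assumes "0 < k" "2 * real n \<le> k * k"
  shows "linearizable (counter_legal k) (chist es)"
  unfolding linearizable_def
proof (intro conjI exI)
  show "well_formed (chist es)" by (rule well_formed_chist)
  show "distinct clin" by (rule distinct_clin)
  show "\<forall>i\<in>set clin. op_inv ch i" using clin_elem unfolding op_inv_def by auto
  show "\<forall>i j. resp_at ch i j \<longrightarrow> i \<in> set clin \<and> ch ! j = HRes (hproc (ch ! i)) (cret i)"
    using clin_responses by blast
  show "\<forall>a b. a < length clin \<longrightarrow> b < length clin \<longrightarrow> (\<exists>j. resp_at ch (clin ! b) j \<and>
    j < clin ! a) \<longrightarrow> b < a"
    using clin_real_time by blast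
  show "counter_legal k cseq" using assms by (rule counter_legal_cseq)
qed

end

section \<open>Wait-freedom\<close>

context execution begin

lemma internal_step_inside: assumes "t < length es" "es!t = MStep p"
  shows "\<exists>j<t. ((\<exists>v. es!j = MWInv p v) \<or> es!j = MRInv p) \<and> only_internal p j t"
proof -
  have st0: "astep k (lst p t) (es!t) = Some (lst p (Suc t))" using assms by (intro lst_step) auto
  have ph: "phase (lst p t) = IncInMW \<or> phase (lst p t) = ReadInMR"
    using astep_MStepD[OF st0[unfolded assms(2)]] by simp
  have "trace_inv p t" using trace_inv_lst assms by simp
  then show ?thesis using ph unfolding trace_inv_def by blast
qed

lemma cresp_within_three: assumes "t1 < length es" "eproc (es!t1) = p" "es!t1 \<noteq> MStep p"
    "has_next p t1" "has_next p (next_step p t1)" "has_next p (next_step p (next_step p t1))"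
  shows "\<exists>x. t1 \<le> x \<and> x < length es \<and> eproc (es!x) = p \<and> is_cresp (es!x)"
proof -
  let ?n1 = "next_step p t1" let ?n2 = "next_step p ?n1" let ?n3 = "next_step p ?n2"
  note N1 = next_step[OF assms(4)] and N2 = next_step[OF assms(5)] and N3 = next_step[OF assms(6)]
  have o: "t1 \<le> ?n1" "t1 \<le> ?n2" "t1 \<le> ?n3" using N1 N2 N3 by linarith+
  have c1: "is_cresp (es!?n1) \<Longrightarrow> ?thesis" using o N1 by blast
  have c2: "is_cresp (es!?n2) \<Longrightarrow> ?thesis" using o N2 by blast
  have c3: "is_cresp (es!?n3) \<Longrightarrow> ?thesis" using o N3 by blast
  have c0: "is_cresp (es!t1) \<Longrightarrow> ?thesis" using assms by blast
  show ?thesis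
  proof (cases "es!t1")
    case (InvInc q)
    with assms have e: "es!t1 = InvInc p" by simp
    from next_after_InvInc[OF e assms(1,4)] show ?thesis
    proof
      assume "\<exists>v. es!?n1 = MWInv p v"
      then obtain v where v: "es!?n1 = MWInv p v" by blast
      have "es!?n2 = MWResp p" using next_after_MWInv[OF v N1(2) assms(5)] .
      then have "es!?n3 = RespInc p" using next_after_MWResp[OF _ N2(2) assms(6)] by simp
      then show ?thesis using c3 unfolding is_cresp_def by simp
    next
      assume "es!?n1 = RespInc p \<and> phase (lst p ?n1) = IncStart"
      then show ?thesis using c1 unfolding is_cresp_def by simp
    qed
  next
    case (InvRead q)
    with assms have e: "es!t1 = InvRead p" by simp
    have "es!?n1 = MRInv p" using next_after_InvRead[OF e assms(1,4)] .
    then obtain r where "es!?n2 = MRResp p r" using next_after_MRInv[OF _ N1(2) assms(5)] by blast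
    then have "\<exists>x. es!?n3 = RespRead p x" using next_after_MRResp[OF _ N2(2) assms(6)] by blast
    then show ?thesis using c3 unfolding is_cresp_def by blast
  next
    case (MWInv q v)
    with assms have e: "es!t1 = MWInv p v" by simp
    have "es!?n1 = MWResp p" using next_after_MWInv[OF e assms(1,4)] .
    then have "es!?n2 = RespInc p" using next_after_MWResp[OF _ N1(2) assms(5)] by simp
    then show ?thesis using c2 unfolding is_cresp_def by simp
  next
    case (MRInv q)
    with assms have e: "es!t1 = MRInv p" by simp
    obtain r where "es!?n1 = MRResp p r" using next_after_MRInv[OF e assms(1,4)] by blast
    then have "\<exists>x. es!?n2 = RespRead p x" using next_after_MRResp[OF _ N1(2) assms(5)] by blast
    then show ?thesis using c2 unfolding is_cresp_def by blast
  next
    case (MWResp q)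
    with assms have e: "es!t1 = MWResp p" by simp
    have "es!?n1 = RespInc p" using next_after_MWResp[OF e assms(1,4)] .
    then show ?thesis using c1 unfolding is_cresp_def by simp
  next
    case (MRResp q r)
    with assms have e: "es!t1 = MRResp p r" by simp
    have "\<exists>x. es!?n1 = RespRead p x" using next_after_MRResp[OF e assms(1,4)] by blast
    then show ?thesis using c1 unfolding is_cresp_def by blast
  next
    case (MStep q) with assms show ?thesis by simp
  next
    case (RespInc q) then show ?thesis using c0 unfolding is_cresp_def by simp
  next
    case (RespRead q x) then show ?thesis using c0 unfolding is_cresp_def by simp
  qed
qed

end

lemma non_internal_step_after:
  assumes ex: "\<forall>t. is_exec n k (map f [0..<t])" and wf: "maxreg_wait_free f"
    and inf: "infinite {t. eproc (f t) = p}"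
  shows "\<exists>t1\<ge>t. eproc (f t1) = p \<and> f t1 \<noteq> MStep p"
proof -
  obtain t0 where t0: "t0 \<ge> t" "eproc (f t0) = p"
    using inf by (auto simp: infinite_nat_iff_unbounded_le)
  show ?thesis
  proof (cases "f t0 = MStep p")
    case False then show ?thesis using t0 by blast
  next
    case True
    define es where "es = map f [0..<Suc t0]"
    have esl: "length es = Suc t0" and esn: "\<And>x. x < Suc t0 \<Longrightarrow> es!x = f x"
      unfolding es_def by (simp_all del: upt_Suc)
    interpret E: execution n k es using ex unfolding es_def by unfold_locales blast
    obtain j where j0: "j < t0" "(\<exists>v. es!j = MWInv p v) \<or> es!j = MRInv p" "E.only_internal p j t0"
      using E.internal_step_inside[of t0 p] True esl esn by auto
    have j: "j < t0" "(\<exists>v. f j = MWInv p v) \<or> f j = MRInv p" "E.only_internal p j t0"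
      using j0 esn by auto
    have mi: "is_minv (f j)" using j(2) unfolding is_minv_def by auto
    have pj: "eproc (f j) = p" using j(2) by auto
    obtain t' where t': "t' > j" "eproc (f t') = p" "is_mresp (f t')"
      using wf mi inf pj unfolding maxreg_wait_free_def by metis
    have "\<not> t' < t0"
    proof
      assume "t' < t0"
      then have "f t' = MStep p" using j(3) t' esn unfolding E.only_internal_def by auto
      then show False using t'(3) unfolding is_mresp_def by auto
    qed
    moreover have "t' \<noteq> t0" using True t'(3) unfolding is_mresp_def by auto
    ultimately have "t' > t0" by simp
    moreover have "f t' \<noteq> MStep p" using t'(3) unfolding is_mresp_def by auto
    ultimately show ?thesis using t0 t' by (intro exI[of _ t']) auto
  qed
qed

lemma counter_wait_free:
  assumes ex: "\<forall>t. is_exec n k (map f [0..<t])" and wf: "maxreg_wait_free f"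
    and inf: "infinite {t. eproc (f t) = p}"
  shows "infinite {t. eproc (f t) = p \<and> is_cresp (f t)}"
proof -
  have "\<And>t. \<exists>t1\<ge>t. eproc (f t1) = p \<and> f t1 \<noteq> MStep p"
    using non_internal_step_after[OF assms] .
  then obtain g where g: "\<And>t. g t \<ge> t \<and> eproc (f (g t)) = p \<and> f (g t) \<noteq> MStep p" by metis
  have main: "\<And>t. \<exists>x\<ge>t. eproc (f x) = p \<and> is_cresp (f x)"
  proof -
    fix t
    define t1 where "t1 = g t"
    define t2 where "t2 = g (Suc t1)"
    define t3 where "t3 = g (Suc t2)"
    define t4 where "t4 = g (Suc t3)"
    have o: "t \<le> t1" "t1 < t2" "t2 < t3" "t3 < t4"
      using g unfolding t1_def t2_def t3_def t4_def by (meson Suc_le_lessD)+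
    define es where "es = map f [0..<Suc t4]"
    have esl: "length es = Suc t4" and nth: "\<And>x. x < Suc t4 \<Longrightarrow> es!x = f x"
      unfolding es_def by (simp_all del: upt_Suc)
    interpret E: execution n k es using ex unfolding es_def by unfold_locales blast
    let ?es = es
    have gg: "\<And>x. eproc (f (g x)) = p \<and> f (g x) \<noteq> MStep p" using g by blast
    have h1: "E.has_next p t1 \<and> E.next_step p t1 \<le> t2"
      using E.next_step_le[of t1 t2 p] o gg[of "Suc t1"] esl nth unfolding t2_def by simp
    have h2: "E.has_next p (E.next_step p t1) \<and> E.next_step p (E.next_step p t1) \<le> t3"
      using E.next_step_le[of "E.next_step p t1" t3 p] o gg[of "Suc t2"] h1 esl nth unfolding t3_def by simp
    have h3: "E.has_next p (E.next_step p (E.next_step p t1))"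
      using E.next_step_le[of "E.next_step p (E.next_step p t1)" t4 p] o gg[of "Suc t3"] h2 esl nth unfolding t4_def by simp
    have t1p: "t1 < length es" "eproc (es!t1) = p" "es!t1 \<noteq> MStep p"
      using o gg[of t] esl nth unfolding t1_def by auto
    obtain x where x: "t1 \<le> x" "x < length ?es" "eproc (?es!x) = p" "is_cresp (?es!x)"
      using E.cresp_within_three[OF t1p h1[THEN conjunct1] h2[THEN conjunct1] h3] by blast
    then show "\<exists>x\<ge>t. eproc (f x) = p \<and> is_cresp (f x)"
      using o nth esl by (intro exI[of _ x]) auto
  qed
  then show ?thesis by (simp add: infinite_nat_iff_unbounded_le)
qed

section \<open>Step complexity\<close>

context execution begin

definition segment :: "(ev \<Rightarrow> bool) \<Rightarrow> nat \<Rightarrow> nat set" where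
  "segment P i = {l. i \<le> l \<and> l < length es \<and> eproc (es!l) = eproc (es!i) \<and>
      (\<forall>l'. i < l' \<and> l' < l \<longrightarrow> \<not> (eproc (es!l') = eproc (es!i) \<and> P (es!l')))}"

lemma seg_steps_eq_card: "seg_steps P es i = card (segment P i)"
  unfolding seg_steps_def segment_def ..

lemma finite_segment: "finite (segment P i)"
  unfolding segment_def by (rule finite_subset[of _ "{..<length es}"]) auto

lemma segment_cresp_after_minv:
  assumes i: "i < length es" "eproc (es!i) = p"
    and s: "i < s" "s < length es" "eproc (es!s) = p" "is_minv (es!s)"
    and l: "l \<in> segment is_cresp i" "s \<le> l"
  shows "l \<in> segment is_mresp s \<or> l = next_step p (next_step p s)"
proof (cases "has_next p s")
  case False
  then have "\<forall>l'. s < l' \<and> l' < l \<longrightarrow> \<not> (eproc (es!l') = p \<and> is_mresp (es!l'))"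
    using next_step_le[of s _ p] l unfolding segment_def is_mresp_def by fastforce
  then show ?thesis using l i s unfolding segment_def by auto
next
  case True
  let ?r = "next_step p s"
  note R = next_step[OF True]
  obtain v where "es!s = MWInv p v \<or> es!s = MRInv p" using s(3,4) unfolding is_minv_def by auto
  then have r: "es!?r = MWResp p \<or> (\<exists>x. es!?r = MRResp p x)"
    using next_after_MWInv[OF _ s(2) True] next_after_MRInv[OF _ s(2) True] by auto
  show ?thesis
  proof (cases "l \<le> ?r")
    case True
    then have "\<forall>l'. s < l' \<and> l' < l \<longrightarrow> \<not> (eproc (es!l') = p \<and> is_mresp (es!l'))"
      using R(5) unfolding is_mresp_def by fastforce
    then show ?thesis using l i s unfolding segment_def by auto
  next
    case False
    have "\<not> is_minv (es!?r)" "es!?r \<noteq> MStep p" using r unfolding is_minv_def by auto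
    moreover have "?r < l" "l < length es" "eproc (es!l) = p" using False l i unfolding segment_def by auto
    ultimately have u: "has_next p ?r" "next_step p ?r \<le> l"
      using next_step_le_after_non_maxreg[OF R(2,3)] by blast+
    note U = next_step[OF u(1)]
    have "is_cresp (es!next_step p ?r)"
      using r next_after_MWResp[OF _ R(2) u(1)] next_after_MRResp[OF _ R(2) u(1)]
      unfolding is_cresp_def by auto
    moreover have "i < next_step p ?r" using s R U by linarith
    ultimately have "\<not> next_step p ?r < l" using l(1) U(3) i(2) unfolding segment_def by blast
    then show ?thesis using u by simp
  qed
qed

lemma segment_cresp_cases:
  assumes i: "i < length es" "is_cinv (es!i)" and p: "p = eproc (es!i)"
  shows "segment is_cresp i \<subseteq> {i, next_step p i} \<or>
    (has_next p i \<and> is_minv (es!next_step p i) \<and>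
     segment is_cresp i \<subseteq> insert i (insert (next_step p (next_step p (next_step p i)))
       (segment is_mresp (next_step p i))))"
proof (cases "segment is_cresp i \<subseteq> {i}")
  case False
  then obtain l where l: "l \<in> segment is_cresp i" "l \<noteq> i" by blast
  have ei: "es!i = InvInc p \<or> es!i = InvRead p" using i(2) p unfolding is_cinv_def by auto
  then have non_maxreg: "\<not> is_minv (es!i)" "es!i \<noteq> MStep p" unfolding is_minv_def by auto
  have after: "has_next p i \<and> next_step p i \<le> l'" if "l' \<in> segment is_cresp i" "l' \<noteq> i" for l'
  proof -
    have "i < l'" "l' < length es" "eproc (es!l') = p" using that p unfolding segment_def by auto
    then show ?thesis using next_step_le_after_non_maxreg[OF i(1) p[symmetric] non_maxreg] by blast
  qed
  let ?s = "next_step p i"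
  have hN: "has_next p i" using after l by blast
  note N = next_step[OF hN]
  show ?thesis
  proof (cases "is_cresp (es!?s)")
    case True
    have "\<not> ?s < l'" if "l' \<in> segment is_cresp i" for l'
      using that True N p unfolding segment_def by blast
    then have "segment is_cresp i \<subseteq> {i, ?s}" using after by fastforce
    then show ?thesis by blast
  next
    case False
    then have "is_minv (es!?s)"
      using ei next_after_InvInc[OF _ i(1) hN] next_after_InvRead[OF _ i(1) hN]
      unfolding is_cresp_def is_minv_def by auto
    moreover have "segment is_cresp i \<subseteq> insert i (insert (next_step p (next_step p ?s)) (segment is_mresp ?s))"
      using segment_cresp_after_minv[OF i(1) p[symmetric] N(1-3) calculation] after by blast
    ultimately show ?thesis using hN by blast
  qed
qed blast

lemma counter_op_steps_le:
  assumes i: "i < length es" "is_cinv (es!i)"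
    and mr: "\<forall>j<length es. is_minv (es!j) \<longrightarrow> real (seg_steps is_mresp es j) \<le> B"
  shows "real (seg_steps is_cresp es i) \<le> 2 + max 0 B"
proof -
  define p where "p = eproc (es!i)"
  let ?s = "next_step p i"
  from segment_cresp_cases[OF i p_def] show ?thesis
  proof
    assume "segment is_cresp i \<subseteq> {i, ?s}"
    then have "card (segment is_cresp i) \<le> card {i, ?s}" by (intro card_mono) auto
    also have "\<dots> \<le> 2" by (simp add: card_insert_if)
    finally show ?thesis unfolding seg_steps_eq_card by simp
  next
    assume "has_next p i \<and> is_minv (es!?s) \<and>
      segment is_cresp i \<subseteq> insert i (insert (next_step p (next_step p ?s)) (segment is_mresp ?s))"
    then have hN: "has_next p i" and m: "is_minv (es!?s)"
      and sub: "segment is_cresp i \<subseteq> insert i (insert (next_step p (next_step p ?s)) (segment is_mresp ?s))"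
      by auto
    have "?s < length es" using next_step(2)[OF hN] .
    then have "real (card (segment is_mresp ?s)) \<le> B" using mr m unfolding seg_steps_eq_card by blast
    moreover have "card (segment is_cresp i) \<le> card (segment is_mresp ?s) + 2"
    proof -
      have "card (segment is_cresp i) \<le> card (insert i (insert (next_step p (next_step p ?s)) (segment is_mresp ?s)))"
        using sub finite_segment by (intro card_mono) auto
      also have "\<dots> \<le> card (segment is_mresp ?s) + 2"
        using finite_segment[of is_mresp ?s] by (simp add: card_insert_if)
      finally show ?thesis .
    qed
    ultimately show ?thesis unfolding seg_steps_eq_card by linarith
  qed
qed

end

lemma log_ceiling_log_le: assumes "(m::nat) \<ge> 1"
  shows "max 1 (log 2 (real_of_int \<lceil>log 2 (real m)\<rceil>)) \<le> 2 * max 1 (log 2 (log 2 (real m)))"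
proof (cases "m = 1")
  case True then show ?thesis by (simp add: log_def)
next
  case False
  then have m2: "(2::real) ^ 1 \<le> real m" using assms by simp
  define x where "x = log 2 (real m)"
  have x1: "x \<ge> 1" unfolding x_def using le_log_of_power[OF m2] by simp
  have c1: "real_of_int \<lceil>x\<rceil> \<ge> 1" using x1 by (meson le_of_int_ceiling order_trans)
  have c2: "real_of_int \<lceil>x\<rceil> \<le> 2 * x" using x1 ceiling_correct[of x] by linarith
  have "log 2 (real_of_int \<lceil>x\<rceil>) \<le> log 2 (2 * x)" using c1 c2 by (intro log_mono) auto
  also have "\<dots> = 1 + log 2 x" using x1 by (simp add: log_mult)
  finally have "log 2 (real_of_int \<lceil>x\<rceil>) \<le> 1 + log 2 x" .
  then show ?thesis unfolding x_def[symmetric] by linarith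
qed

theorem algorithm_A_step_bound:
  assumes m: "1 \<le> m" and ex: "is_exec n k es"
    and mr: "\<forall>i < length es. is_minv (es ! i) \<longrightarrow>
          real (seg_steps is_mresp es i) \<le> c * max 1 (log 2 (real_of_int \<lceil>log 2 (real m)\<rceil>))"
    and i: "i < length es" "is_cinv (es ! i)"
  shows "real (seg_steps is_cresp es i) \<le> (2 + 2 * \<bar>c\<bar>) * max 1 (log 2 (log 2 (real m)))"
proof -
  interpret execution n k es by (rule execution.intro) (rule ex)
  let ?A = "max 1 (log 2 (real_of_int \<lceil>log 2 (real m)\<rceil>))" and ?B = "max 1 (log 2 (log 2 (real m)))"
  have "real (seg_steps is_cresp es i) \<le> 2 + max 0 (c * ?A)"
    using counter_op_steps_le[OF i mr] .
  moreover have "max 0 (c * ?A) \<le> \<bar>c\<bar> * ?A"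
    using mult_right_mono[of c "\<bar>c\<bar>" ?A] by simp
  moreover have "\<bar>c\<bar> * ?A \<le> \<bar>c\<bar> * (2 * ?B)"
    using log_ceiling_log_le[OF m] by (intro mult_left_mono) auto
  moreover have "(2 + 2 * \<bar>c\<bar>) * ?B = 2 * ?B + \<bar>c\<bar> * (2 * ?B)" by (simp add: algebra_simps)
  moreover have "1 \<le> ?B" by simp
  ultimately show ?thesis by linarith
qed

theorem algorithm_A_linearizable:
  assumes n: "1 \<le> n" and k: "sqrt (2 * real n) \<le> k"
    and ex: "is_exec n k es" and lin: "linearizable maxreg_legal (mhist es)"
  shows "linearizable (counter_legal k) (chist es)"
proof -
  interpret execution n k es by (rule execution.intro) (rule ex)
  obtain L ret where "distinct L" "\<forall>i\<in>set L. op_inv (mhist es) i"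
    "\<forall>i j. resp_at (mhist es) i j \<longrightarrow> i \<in> set L \<and> mhist es ! j = HRes (hproc (mhist es ! i)) (ret i)"
    "\<forall>a b. a < length L \<longrightarrow> b < length L \<longrightarrow> (\<exists>j. resp_at (mhist es) (L!b) j \<and>
      j < L!a) \<longrightarrow> b < a"
    "maxreg_legal (map (\<lambda>i. (inv_arg (mhist es ! i), ret i)) L)"
    using lin unfolding linearizable_def by blast
  then interpret lin_execution n k es L ret by unfold_locales
  show ?thesis using sqrt_le_imp_square_le[OF n k] chist_linearizable by blast
qed

theorem mainTheorem3:
  shows
   "(\<forall>(n::nat) (m::nat) (k::real) es.
       n \<ge> 1 \<and> m \<ge> 1 \<and> k \<ge> sqrt (2 * real n) \<and>
       is_exec n k es \<and> num_incs es \<le> m \<and> linearizable maxreg_legal (mhist es) \<longrightarrow>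
         (\<forall>p v. MWInv p v \<in> set es \<longrightarrow> v \<le> \<lceil>log 2 (real m)\<rceil>) \<and>
         linearizable (counter_legal k) (chist es))
  \<and> (\<forall>(n::nat) (m::nat) (k::real) (f :: nat \<Rightarrow> ev).
       n \<ge> 1 \<and> m \<ge> 1 \<and> k \<ge> sqrt (2 * real n) \<and>
       (\<forall>t. is_exec n k (map f [0..<t]) \<and> num_incs (map f [0..<t]) \<le> m) \<and>
       maxreg_wait_free f \<longrightarrow>
         (\<forall>p. infinite {t. eproc (f t) = p} \<longrightarrow> infinite {t. eproc (f t) = p \<and> is_cresp (f t)}))
  \<and> (\<forall>c::real. \<exists>C::real. \<forall>(n::nat) (m::nat) (k::real) es.
       n \<ge> 1 \<and> m \<ge> 1 \<and> k \<ge> sqrt (2 * real n) \<and>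
       is_exec n k es \<and> num_incs es \<le> m \<and> linearizable maxreg_legal (mhist es) \<and>
       (\<forall>i < length es. is_minv (es ! i) \<longrightarrow>
          real (seg_steps is_mresp es i) \<le> c * max 1 (log 2 (real_of_int \<lceil>log 2 (real m)\<rceil>))) \<longrightarrow>
         (\<forall>i < length es. is_cinv (es ! i) \<longrightarrow>
            real (seg_steps is_cresp es i) \<le> C * max 1 (log 2 (log 2 (real m)))))"
proof (intro conjI allI impI exI; elim conjE)
qed (rule MWInv_arg_bound algorithm_A_linearizable counter_wait_free algorithm_A_step_bound;
     (assumption | blast))+

end
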